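(* Let $\Lambda$ be a unital commutative ring, $q$ a non-negative integer, $\Lambda_q=\Lambda/q\Lambda$, and $\mathfrak g$ a Lie algebra over $\Lambda$ such that $\mathfrak g/(\mathfrak g\#_q\mathfrak g)$ is a free $\Lambda_q$-module. Let $i\colon\Gamma\big(\mathfrak g/(\mathfrak g\#_q\mathfrak g)\big)\to\mathfrak g\otimes^q\mathfrak g$ be the homomorphism $i\big(\gamma(g+\mathfrak g\#_q\mathfrak g)\big)=g\otimes g$, and let $p\colon\mathfrak g\otimes^q\mathfrak g\to\big(\mathfrak g/(\mathfrak g\#_q\mathfrak g)\big)\otimes^q\big(\mathfrak g/(\mathfrak g\#_q\mathfrak g)\big)$ be the canonical projection. Then $i\big(\Gamma(\mathfrak g/(\mathfrak g\#_q\mathfrak g))\big)\cap\operatorname{Ker}p=\{0\}$.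
   Context: All Lie algebras are over $\Lambda$. $\mathfrak g\#_q\mathfrak g$ is the $\Lambda$-submodule (an ideal) of $\mathfrak g$ generated by all $[h,g]$ and $qh'$, $h,h',g\in\mathfrak g$. Non-abelian $q$-tensor square: for $q\ge1$, $\mathfrak g\otimes^q\mathfrak g$ is the Lie algebra generated by symbols $h\otimes g$ and $\{h\}$ ($h,g\in\mathfrak g$) subject to, for all $h,h',g,g'\in\mathfrak g$, $\lambda,\lambda'\in\Lambda$: (1) $\lambda(h\otimes g)=\lambda h\otimes g=h\otimes\lambda g$; (2) $(h+h')\otimes g=h\otimes g+h'\otimes g$; (3) $h\otimes(g+g')=h\otimes g+h\otimes g'$; (4) $[h,h']\otimes g=h\otimes[h',g]-h'\otimes[h,g]$; (5) $h\otimes[g,g']=[g',h]\otimes g-[g,h]\otimes g'$; (6) $[h\otimes g,h'\otimes g']=[h,g]\otimes[h',g']$; (7) $[\{h'\},h\otimes g]=[qh',h]\otimes g+h\otimes[qh',g]$; (8) $\{\lambda h+\lambda'h'\}=\lambda\{h\}+\lambda'\{h'\}$; (9) $[\{h\},\{h'\}]=qh\otimes qh'$; (10) $\{[h,g]\}=q(h\otimes g)$. For $q=0$, generated by the $h\otimes g$ subject to (1)–(6) only. The map $p$ is induced by the quotient map $\mathfrak g\to\mathfrak g/(\mathfrak g\#_q\mathfrak g)$. Whitehead's quadratic functor: for a $\Lambda$-module $A$, $\Gamma(A)$ is the $\Lambda$-module generated by $\gamma(a)$, $a\in A$, subject to $\lambda^2\gamma(a)=\gamma(\lambda a)$; $\gamma(a+b+c)+\gamma(a)+\gamma(b)+\gamma(c)=\gamma(a+b)+\gamma(a+c)+\gamma(b+c)$;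 $\gamma(\lambda a+b)+\lambda\gamma(a)+\lambda\gamma(b)=\lambda\gamma(a+b)+\gamma(\lambda a)+\gamma(b)$. *)

theory Defs
  imports Main
begin

text \<open>Negation is scalar multiplication by -1.\<close>

record ('r, 'a) liealg =
  lcarrier :: "'a set"
  ladd :: "'a \<Rightarrow> 'a \<Rightarrow> 'a"
  lzero :: "'a"
  lsmult :: "'r \<Rightarrow> 'a \<Rightarrow> 'a"
  lbr :: "'a \<Rightarrow> 'a \<Rightarrow> 'a"

definition is_lie :: "('r::comm_ring_1, 'a) liealg \<Rightarrow> bool" where
  "is_lie L \<longleftrightarrow>
     lzero L \<in> lcarrier L \<and>
     (\<forall>x\<in>lcarrier L. \<forall>y\<in>lcarrier L. ladd L x y \<in> lcarrier L) \<and>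
     (\<forall>r. \<forall>x\<in>lcarrier L. lsmult L r x \<in> lcarrier L) \<and>
     (\<forall>x\<in>lcarrier L. \<forall>y\<in>lcarrier L. lbr L x y \<in> lcarrier L) \<and>
     (\<forall>x\<in>lcarrier L. \<forall>y\<in>lcarrier L. \<forall>z\<in>lcarrier L.
         ladd L (ladd L x y) z = ladd L x (ladd L y z)) \<and>
     (\<forall>x\<in>lcarrier L. \<forall>y\<in>lcarrier L. ladd L x y = ladd L y x) \<and>
     (\<forall>x\<in>lcarrier L. ladd L x (lzero L) = x) \<and>
     (\<forall>x\<in>lcarrier L. ladd L x (lsmult L (-1) x) = lzero L) \<and>
     (\<forall>r. \<forall>x\<in>lcarrier L. \<forall>y\<in>lcarrier L.
         lsmult L r (ladd L x y) = ladd L (lsmult L r x) (lsmult L r y)) \<and>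
     (\<forall>r s. \<forall>x\<in>lcarrier L. lsmult L (r + s) x = ladd L (lsmult L r x) (lsmult L s x)) \<and>
     (\<forall>r s. \<forall>x\<in>lcarrier L. lsmult L (r * s) x = lsmult L r (lsmult L s x)) \<and>
     (\<forall>x\<in>lcarrier L. lsmult L 1 x = x) \<and>
     (\<forall>x\<in>lcarrier L. \<forall>y\<in>lcarrier L. \<forall>z\<in>lcarrier L.
         lbr L (ladd L x y) z = ladd L (lbr L x z) (lbr L y z)) \<and>
     (\<forall>x\<in>lcarrier L. \<forall>y\<in>lcarrier L. \<forall>z\<in>lcarrier L.
         lbr L x (ladd L y z) = ladd L (lbr L x y) (lbr L x z)) \<and>
     (\<forall>r. \<forall>x\<in>lcarrier L. \<forall>y\<in>lcarrier L.
         lbr L (lsmult L r x) y = lsmult L r (lbr L x y) \<and>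
         lbr L x (lsmult L r y) = lsmult L r (lbr L x y)) \<and>
     (\<forall>x\<in>lcarrier L. lbr L x x = lzero L) \<and>
     (\<forall>x\<in>lcarrier L. \<forall>y\<in>lcarrier L. \<forall>z\<in>lcarrier L.
         ladd L (lbr L x (lbr L y z)) (ladd L (lbr L y (lbr L z x)) (lbr L z (lbr L x y)))
           = lzero L)"

inductive_set submod_gen :: "('r::comm_ring_1, 'a) liealg \<Rightarrow> 'a set \<Rightarrow> 'a set"
  for L :: "('r, 'a) liealg" and S :: "'a set" where
  sg_zero: "lzero L \<in> submod_gen L S"
| sg_gen: "s \<in> S \<Longrightarrow> s \<in> submod_gen L S"
| sg_add: "x \<in> submod_gen L S \<Longrightarrow> y \<in> submod_gen L S \<Longrightarrow> ladd L x y \<in> submod_gen L S"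
| sg_smult: "x \<in> submod_gen L S \<Longrightarrow> lsmult L r x \<in> submod_gen L S"

definition sharp :: "('r::comm_ring_1, 'a) liealg \<Rightarrow> nat \<Rightarrow> 'a set" where
  "sharp L q = submod_gen L
     ({lbr L h g | h g. h \<in> lcarrier L \<and> g \<in> lcarrier L} \<union>
      {lsmult L (of_nat q) h | h. h \<in> lcarrier L})"

definition coset :: "('r, 'a) liealg \<Rightarrow> 'a set \<Rightarrow> 'a \<Rightarrow> 'a set" where
  "coset L N x = {ladd L x n | n. n \<in> N}"

definition rep :: "'a set \<Rightarrow> 'a" where
  "rep A = (SOME x. x \<in> A)"

definition quot :: "('r::comm_ring_1, 'a) liealg \<Rightarrow> 'a set \<Rightarrow> ('r, 'a set) liealg" where
  "quot L N =
     \<lparr> lcarrier = coset L N ` lcarrier L,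
       ladd = (\<lambda>A B. coset L N (ladd L (rep A) (rep B))),
       lzero = coset L N (lzero L),
       lsmult = (\<lambda>r A. coset L N (lsmult L r (rep A))),
       lbr = (\<lambda>A B. coset L N (lbr L (rep A) (rep B))) \<rparr>"

definition lincomb :: "('r, 'a) liealg \<Rightarrow> ('r \<times> 'a) list \<Rightarrow> 'a" where
  "lincomb M xs = foldr (\<lambda>(c, b) acc. ladd M (lsmult M c b) acc) xs (lzero M)"

text \<open>M (a Lambda-module annihilated by q) is a free module over Lambda_q = Lambda / q Lambda:
there is a basis B such that every element is a finite Lambda-combination of B, and
a combination of distinct basis elements vanishes only if all coefficients lie in q Lambda
(i.e. vanish in Lambda_q).\<close>

definition free_mod_q :: "('r::comm_ring_1, 'a) liealg \<Rightarrow> nat \<Rightarrow> bool" where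
  "free_mod_q M q \<longleftrightarrow>
     (\<exists>B \<subseteq> lcarrier M.
        (\<forall>x\<in>lcarrier M. \<exists>xs. set (map snd xs) \<subseteq> B \<and> x = lincomb M xs) \<and>
        (\<forall>xs. set (map snd xs) \<subseteq> B \<longrightarrow> distinct (map snd xs) \<longrightarrow>
              lincomb M xs = lzero M \<longrightarrow> (\<forall>c\<in>set (map fst xs). (of_nat q :: 'r) dvd c)))"

datatype ('r, 'x) expr =
    EGen 'x
  | EZero
  | EAdd "('r, 'x) expr" "('r, 'x) expr"
  | ESmul 'r "('r, 'x) expr"
  | EBrk "('r, 'x) expr" "('r, 'x) expr"

fun emap :: "('x \<Rightarrow> 'y) \<Rightarrow> ('r, 'x) expr \<Rightarrow> ('r, 'y) expr" where
  "emap f (EGen x) = EGen (f x)"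
| "emap f EZero = EZero"
| "emap f (EAdd a b) = EAdd (emap f a) (emap f b)"
| "emap f (ESmul r a) = ESmul r (emap f a)"
| "emap f (EBrk a b) = EBrk (emap f a) (emap f b)"

text \<open>Expressions modulo lie_cong R form the Lie algebra presented by the
generators and relations R; two expressions denote the same element iff they are related.\<close>

inductive lie_cong :: "(('r::comm_ring_1, 'x) expr \<times> ('r, 'x) expr) set \<Rightarrow>
                        ('r, 'x) expr \<Rightarrow> ('r, 'x) expr \<Rightarrow> bool"
  for R where
  lc_rel: "(a, b) \<in> R \<Longrightarrow> lie_cong R a b"
| lc_refl: "lie_cong R a a"
| lc_sym: "lie_cong R a b \<Longrightarrow> lie_cong R b a"
| lc_trans: "lie_cong R a b \<Longrightarrow> lie_cong R b c \<Longrightarrow> lie_cong R a c"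
| lc_add: "lie_cong R a a' \<Longrightarrow> lie_cong R b b' \<Longrightarrow> lie_cong R (EAdd a b) (EAdd a' b')"
| lc_smul: "lie_cong R a a' \<Longrightarrow> lie_cong R (ESmul r a) (ESmul r a')"
| lc_brk: "lie_cong R a a' \<Longrightarrow> lie_cong R b b' \<Longrightarrow> lie_cong R (EBrk a b) (EBrk a' b')"
| lc_add_assoc: "lie_cong R (EAdd (EAdd a b) c) (EAdd a (EAdd b c))"
| lc_add_comm: "lie_cong R (EAdd a b) (EAdd b a)"
| lc_add_zero: "lie_cong R (EAdd a EZero) a"
| lc_add_neg: "lie_cong R (EAdd a (ESmul (-1) a)) EZero"
| lc_smul_add: "lie_cong R (ESmul r (EAdd a b)) (EAdd (ESmul r a) (ESmul r b))"
| lc_add_smul: "lie_cong R (ESmul (r + s) a) (EAdd (ESmul r a) (ESmul s a))"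
| lc_mult_smul: "lie_cong R (ESmul (r * s) a) (ESmul r (ESmul s a))"
| lc_one_smul: "lie_cong R (ESmul 1 a) a"
| lc_brk_addL: "lie_cong R (EBrk (EAdd a b) c) (EAdd (EBrk a c) (EBrk b c))"
| lc_brk_addR: "lie_cong R (EBrk a (EAdd b c)) (EAdd (EBrk a b) (EBrk a c))"
| lc_brk_smulL: "lie_cong R (EBrk (ESmul r a) b) (ESmul r (EBrk a b))"
| lc_brk_smulR: "lie_cong R (EBrk a (ESmul r b)) (ESmul r (EBrk a b))"
| lc_alt: "lie_cong R (EBrk a a) EZero"
| lc_jacobi: "lie_cong R (EAdd (EBrk a (EBrk b c)) (EAdd (EBrk b (EBrk c a)) (EBrk c (EBrk a b)))) EZero"

text \<open>Generator symbols: h \<otimes> g and {h}.\<close>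

datatype 'a tgen = Tens 'a 'a | Curly 'a

abbreviation T :: "'a \<Rightarrow> 'a \<Rightarrow> ('r, 'a tgen) expr" where
  "T h g \<equiv> EGen (Tens h g)"

abbreviation Cu :: "'a \<Rightarrow> ('r, 'a tgen) expr" where
  "Cu h \<equiv> EGen (Curly h)"

definition tsq_gens :: "('r, 'a) liealg \<Rightarrow> nat \<Rightarrow> 'a tgen set" where
  "tsq_gens L q = {Tens h g | h g. h \<in> lcarrier L \<and> g \<in> lcarrier L} \<union>
                  {Curly h | h. h \<in> lcarrier L \<and> q \<ge> 1}"

text \<open>Defining relations (1)-(10) (only (1)-(6) for q = 0). Non-admissible generator symbols
are set to zero, so that the presented algebra is generated exactly by the admissible ones.\<close>

definition tsq_rel :: "('r::comm_ring_1, 'a) liealg \<Rightarrow> nat \<Rightarrow>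
                       (('r, 'a tgen) expr \<times> ('r, 'a tgen) expr) set" where
  "tsq_rel L q =
     {(EGen x, EZero) | x. x \<notin> tsq_gens L q} \<union>
     \<comment> \<open>(1)\<close>
     {(ESmul r (T h g), T (lsmult L r h) g) | r h g. h \<in> lcarrier L \<and> g \<in> lcarrier L} \<union>
     {(ESmul r (T h g), T h (lsmult L r g)) | r h g. h \<in> lcarrier L \<and> g \<in> lcarrier L} \<union>
     \<comment> \<open>(2)\<close>
     {(T (ladd L h h') g, EAdd (T h g) (T h' g)) | h h' g.
         h \<in> lcarrier L \<and> h' \<in> lcarrier L \<and> g \<in> lcarrier L} \<union>
     \<comment> \<open>(3)\<close>
     {(T h (ladd L g g'), EAdd (T h g) (T h g')) | h g g'.
         h \<in> lcarrier L \<and> g \<in> lcarrier L \<and> g' \<in> lcarrier L} \<union>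
     \<comment> \<open>(4)\<close>
     {(T (lbr L h h') g, EAdd (T h (lbr L h' g)) (ESmul (-1) (T h' (lbr L h g)))) | h h' g.
         h \<in> lcarrier L \<and> h' \<in> lcarrier L \<and> g \<in> lcarrier L} \<union>
     \<comment> \<open>(5)\<close>
     {(T h (lbr L g g'), EAdd (T (lbr L g' h) g) (ESmul (-1) (T (lbr L g h) g'))) | h g g'.
         h \<in> lcarrier L \<and> g \<in> lcarrier L \<and> g' \<in> lcarrier L} \<union>
     \<comment> \<open>(6)\<close>
     {(EBrk (T h g) (T h' g'), T (lbr L h g) (lbr L h' g')) | h g h' g'.
         h \<in> lcarrier L \<and> g \<in> lcarrier L \<and> h' \<in> lcarrier L \<and> g' \<in> lcarrier L} \<union>
     (if q \<ge> 1 then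
       \<comment> \<open>(7)\<close>
       {(EBrk (Cu h') (T h g),
         EAdd (T (lbr L (lsmult L (of_nat q) h') h) g) (T h (lbr L (lsmult L (of_nat q) h') g)))
         | h' h g. h' \<in> lcarrier L \<and> h \<in> lcarrier L \<and> g \<in> lcarrier L} \<union>
       \<comment> \<open>(8)\<close>
       {(Cu (ladd L (lsmult L r h) (lsmult L r' h')), EAdd (ESmul r (Cu h)) (ESmul r' (Cu h')))
         | r r' h h'. h \<in> lcarrier L \<and> h' \<in> lcarrier L} \<union>
       \<comment> \<open>(9)\<close>
       {(EBrk (Cu h) (Cu h'), T (lsmult L (of_nat q) h) (lsmult L (of_nat q) h'))
         | h h'. h \<in> lcarrier L \<and> h' \<in> lcarrier L} \<union>
       \<comment> \<open>(10)\<close>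
       {(Cu (lbr L h g), ESmul (of_nat q) (T h g)) | h g. h \<in> lcarrier L \<and> g \<in> lcarrier L}
      else {})"

text \<open>Elements of g \<otimes>^q g are the classes of expressions modulo lie_cong (tsq_rel L q).\<close>

abbreviation tsq_eq :: "('r::comm_ring_1, 'a) liealg \<Rightarrow> nat \<Rightarrow>
                        ('r, 'a tgen) expr \<Rightarrow> ('r, 'a tgen) expr \<Rightarrow> bool" where
  "tsq_eq L q \<equiv> lie_cong (tsq_rel L q)"

inductive_set espan :: "('r, 'x) expr set \<Rightarrow> ('r, 'x) expr set" for S where
  es_zero: "EZero \<in> espan S"
| es_gen: "s \<in> S \<Longrightarrow> s \<in> espan S"
| es_add: "a \<in> espan S \<Longrightarrow> b \<in> espan S \<Longrightarrow> EAdd a b \<in> espan S"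
| es_smul: "a \<in> espan S \<Longrightarrow> ESmul r a \<in> espan S"

fun pgen :: "('r, 'a) liealg \<Rightarrow> 'a set \<Rightarrow> 'a tgen \<Rightarrow> 'a set tgen" where
  "pgen L N (Tens h g) = Tens (coset L N h) (coset L N g)"
| "pgen L N (Curly h) = Curly (coset L N h)"

end

(* The quotient M = g/(g #_q g) is abelian and free over \<Lambda>/q\<Lambda>, so each basis element b
   yields a coordinate functional c_b on M that is \<Lambda>-linear modulo q.  For basis elements b, b'
   the assignment A \<otimes> A' \<mapsto> c_b(A) c_b'(A') respects the defining relations of M \<otimes>^q M
   modulo q, so all these coefficients of p(x) are divisible by q when p(x) = 0.

   In g \<otimes>^q g every n in g #_q g satisfies n \<otimes> n = 0 and n \<otimes> w + w \<otimes> n = 0, so g \<otimes> g only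
   depends on g modulo g #_q g.  Writing g = \<Sum> f_i e_i modulo the ideal, with e_i lifts of
   basis elements, expresses x as \<Sum> K_ij e_i \<otimes> e_j, where K_ij is exactly the coefficient above
   for the basis elements of e_i and e_j.  Thus K is q times a symmetric matrix, and since
   q (a \<otimes> b + b \<otimes> a) = 0 = q (a \<otimes> a) by relation (10), x vanishes. *)

theory Submission
  imports Defs
begin

section \<open>Linear normal form of formal expressions\<close>

text \<open>Brackets are atoms here, so equal coefficients only witness identities of the underlying
  module.\<close>

fun atom_coeff :: "('r::comm_ring_1, 'x) expr \<Rightarrow> ('r, 'x) expr \<Rightarrow> 'r" where
  "atom_coeff EZero = (\<lambda>t. 0)"
| "atom_coeff (EGen x) = (\<lambda>t. if t = EGen x then 1 else 0)"
| "atom_coeff (EBrk a b) = (\<lambda>t. if t = EBrk a b then 1 else 0)"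
| "atom_coeff (EAdd a b) = (\<lambda>t. atom_coeff a t + atom_coeff b t)"
| "atom_coeff (ESmul r a) = (\<lambda>t. r * atom_coeff a t)"

fun atoms :: "('r, 'x) expr \<Rightarrow> ('r, 'x) expr list" where
  "atoms EZero = []"
| "atoms (EGen x) = [EGen x]"
| "atoms (EBrk a b) = [EBrk a b]"
| "atoms (EAdd a b) = atoms a @ atoms b"
| "atoms (ESmul r a) = atoms a"

lemma atom_coeff_notin_atoms: "t \<notin> set (atoms a) \<Longrightarrow> atom_coeff a t = 0"
  by (induction a) auto

definition atom_sum :: "('r, 'x) expr list \<Rightarrow> (('r, 'x) expr \<Rightarrow> 'r) \<Rightarrow> ('r, 'x) expr" where
  "atom_sum ts f = foldr (\<lambda>t acc. EAdd (ESmul (f t) t) acc) ts EZero"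

lemma atom_sum_simps [simp]:
  "atom_sum [] f = EZero"
  "atom_sum (t # ts) f = EAdd (ESmul (f t) t) (atom_sum ts f)"
  by (simp_all add: atom_sum_def)

declare lc_trans [trans]

context
  fixes R :: "(('r::comm_ring_1, 'x) expr \<times> ('r, 'x) expr) set"
begin

abbreviation lie_cong_R (infix "\<approx>" 50) where "a \<approx> b \<equiv> lie_cong R a b"

lemma lie_cong_zero_add: "EAdd EZero a \<approx> a"
  by (meson lc_add_comm lc_add_zero lc_trans)

lemma lie_cong_zero_if_add_self: "EAdd s s \<approx> s \<Longrightarrow> s \<approx> EZero"
proof -
  assume h: "EAdd s s \<approx> s"
  have "s \<approx> EAdd s EZero" by (rule lc_sym, rule lc_add_zero)
  also have "EAdd s EZero \<approx> EAdd s (EAdd s (ESmul (-1) s))"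
    by (rule lc_add, rule lc_refl, rule lc_sym, rule lc_add_neg)
  also have "\<dots> \<approx> EAdd (EAdd s s) (ESmul (-1) s)" by (rule lc_sym, rule lc_add_assoc)
  also have "\<dots> \<approx> EAdd s (ESmul (-1) s)" by (rule lc_add[OF h lc_refl])
  also have "\<dots> \<approx> EZero" by (rule lc_add_neg)
  finally show ?thesis .
qed

lemma lie_cong_zero_smul: "ESmul 0 a \<approx> EZero"
proof (rule lie_cong_zero_if_add_self)
  have "EAdd (ESmul 0 a) (ESmul 0 a) \<approx> ESmul (0 + 0) a" by (rule lc_sym, rule lc_add_smul)
  then show "EAdd (ESmul 0 a) (ESmul 0 a) \<approx> ESmul 0 a" by simp
qed

lemma lie_cong_smul_zero: "ESmul r EZero \<approx> EZero"
proof -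
  have "ESmul r EZero \<approx> ESmul r (ESmul 0 EZero)" by (rule lc_smul, rule lc_sym, rule lie_cong_zero_smul)
  also have "\<dots> \<approx> ESmul (r * 0) EZero" by (rule lc_sym, rule lc_mult_smul)
  also have "\<dots> \<approx> EZero" by (simp add: lie_cong_zero_smul)
  finally show ?thesis .
qed

lemma lie_cong_add_add_swap: "EAdd (EAdd a b) (EAdd c d) \<approx> EAdd (EAdd a c) (EAdd b d)"
proof -
  have "EAdd (EAdd a b) (EAdd c d) \<approx> EAdd a (EAdd b (EAdd c d))" by (rule lc_add_assoc)
  also have "\<dots> \<approx> EAdd a (EAdd (EAdd b c) d)"
    by (rule lc_add[OF lc_refl], rule lc_sym, rule lc_add_assoc)
  also have "\<dots> \<approx> EAdd a (EAdd (EAdd c b) d)"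
    by (rule lc_add[OF lc_refl], rule lc_add[OF lc_add_comm lc_refl])
  also have "\<dots> \<approx> EAdd a (EAdd c (EAdd b d))" by (rule lc_add[OF lc_refl], rule lc_add_assoc)
  also have "\<dots> \<approx> EAdd (EAdd a c) (EAdd b d)" by (rule lc_sym, rule lc_add_assoc)
  finally show ?thesis .
qed

lemma lie_cong_add_zeroI: "a \<approx> EZero \<Longrightarrow> b \<approx> EZero \<Longrightarrow> EAdd a b \<approx> EZero"
  by (meson lc_add lc_add_zero lc_trans)

lemma atom_sum_zero: "(\<forall>t\<in>set ts. f t = 0) \<Longrightarrow> atom_sum ts f \<approx> EZero"
  by (induction ts) (auto intro: lc_refl lie_cong_add_zeroI lie_cong_zero_smul)

lemma atom_sum_indicator:
  "distinct ts \<Longrightarrow> a \<in> set ts \<Longrightarrow> atom_sum ts (\<lambda>t. if t = a then 1 else 0) \<approx> a"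
proof (induction ts)
  case (Cons t ts)
  show ?case
  proof (cases "t = a")
    case True
    with Cons have "atom_sum ts (\<lambda>t. if t = a then 1 else 0) \<approx> EZero"
      by (intro atom_sum_zero) auto
    then have "atom_sum (t # ts) (\<lambda>t. if t = a then 1 else 0) \<approx> EAdd a EZero"
      using True by (auto intro!: lc_add lc_one_smul)
    then show ?thesis using lc_add_zero lc_trans by blast
  next
    case False
    with Cons have "atom_sum (t # ts) (\<lambda>t. if t = a then 1 else 0) \<approx> EAdd EZero a"
      by (auto intro!: lc_add lie_cong_zero_smul)
    then show ?thesis using lie_cong_zero_add lc_trans by blast
  qed
qed simp

lemma atom_sum_add: "atom_sum ts (\<lambda>t. f t + g t) \<approx> EAdd (atom_sum ts f) (atom_sum ts g)"
proof (induction ts)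
  case (Cons t ts)
  have "atom_sum (t # ts) (\<lambda>t. f t + g t) \<approx>
        EAdd (EAdd (ESmul (f t) t) (ESmul (g t) t)) (EAdd (atom_sum ts f) (atom_sum ts g))"
    using Cons by (auto intro!: lc_add lc_add_smul)
  also have "\<dots> \<approx> EAdd (atom_sum (t # ts) f) (atom_sum (t # ts) g)"
    by (simp add: lie_cong_add_add_swap)
  finally show ?case .
qed (simp add: lc_sym lc_add_zero)

lemma atom_sum_smul: "atom_sum ts (\<lambda>t. r * f t) \<approx> ESmul r (atom_sum ts f)"
proof (induction ts)
  case (Cons t ts)
  have "atom_sum (t # ts) (\<lambda>t. r * f t) \<approx>
        EAdd (ESmul r (ESmul (f t) t)) (ESmul r (atom_sum ts f))"
    using Cons by (auto intro!: lc_add lc_mult_smul)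
  also have "\<dots> \<approx> ESmul r (atom_sum (t # ts) f)" by (simp add: lc_sym lc_smul_add)
  finally show ?case .
qed (simp add: lc_sym lie_cong_smul_zero)

lemma lie_cong_atom_sum:
  "distinct ts \<Longrightarrow> set (atoms a) \<subseteq> set ts \<Longrightarrow> a \<approx> atom_sum ts (atom_coeff a)"
proof (induction a)
  case (EGen x)
  then show ?case using atom_sum_indicator[of ts "EGen x"] by (simp add: lc_sym)
next
  case EZero
  then show ?case using atom_sum_zero[of ts "\<lambda>t. 0"] by (simp add: lc_sym)
next
  case (EAdd a b)
  then have "EAdd a b \<approx> EAdd (atom_sum ts (atom_coeff a)) (atom_sum ts (atom_coeff b))"
    by (auto intro!: lc_add)
  also have "\<dots> \<approx> atom_sum ts (atom_coeff (EAdd a b))" using atom_sum_add by (simp add: lc_sym)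
  finally show ?case .
next
  case (ESmul r a)
  then have "ESmul r a \<approx> ESmul r (atom_sum ts (atom_coeff a))" by (auto intro!: lc_smul)
  also have "\<dots> \<approx> atom_sum ts (atom_coeff (ESmul r a))" using atom_sum_smul by (simp add: lc_sym)
  finally show ?case .
next
  case (EBrk a b)
  then show ?case using atom_sum_indicator[of ts "EBrk a b"] by (simp add: lc_sym)
qed

lemma lie_cong_if_atom_coeff_eq: "atom_coeff a = atom_coeff b \<Longrightarrow> a \<approx> b"
proof -
  assume eq: "atom_coeff a = atom_coeff b"
  let ?ts = "remdups (atoms a @ atoms b)"
  have "a \<approx> atom_sum ?ts (atom_coeff a)" by (rule lie_cong_atom_sum) auto
  also have "\<dots> \<approx> b" unfolding eq by (rule lc_sym, rule lie_cong_atom_sum) auto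
  finally show ?thesis .
qed

lemma lie_cong_eq_neg_if_add_zero: "EAdd a b \<approx> EZero \<Longrightarrow> a \<approx> ESmul (-1) b"
proof -
  assume sum: "EAdd a b \<approx> EZero"
  have "a \<approx> EAdd (EAdd a b) (ESmul (-1) b)"
    by (rule lie_cong_if_atom_coeff_eq) (simp add: fun_eq_iff)
  also have "\<dots> \<approx> EAdd EZero (ESmul (-1) b)" by (rule lc_add[OF sum lc_refl])
  also have "\<dots> \<approx> ESmul (-1) b" by (rule lie_cong_zero_add)
  finally show ?thesis .
qed

end

fun esum :: "nat \<Rightarrow> (nat \<Rightarrow> ('r, 'x) expr) \<Rightarrow> ('r, 'x) expr" where
  "esum 0 F = EZero"
| "esum (Suc m) F = EAdd (esum m F) (F m)"

abbreviation lincomb_esum :: "nat \<Rightarrow> (nat \<Rightarrow> 'r) \<Rightarrow> (nat \<Rightarrow> 'x) \<Rightarrow> ('r, 'x) expr" where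
  "lincomb_esum m f e \<equiv> esum m (\<lambda>i. ESmul (f i) (EGen (e i)))"

lemma esum_cong: "(\<And>i. i < m \<Longrightarrow> F i = G i) \<Longrightarrow> esum m F = esum m G"
  by (induction m) auto

lemma atom_coeff_esum: "atom_coeff (esum m F) t = (\<Sum>i<m. atom_coeff (F i) t)"
  by (induction m) auto

lemma esum_lie_cong:
  "(\<And>i. i < m \<Longrightarrow> lie_cong R (F i) (G i)) \<Longrightarrow> lie_cong R (esum m F) (esum m G)"
  by (induction m) (auto intro: lc_add lc_refl)

lemma esum_lie_cong_zero:
  "(\<And>i. i < m \<Longrightarrow> lie_cong R (F i) EZero) \<Longrightarrow> lie_cong R (esum m F) EZero"
  by (induction m) (auto intro: lc_refl lie_cong_add_zeroI)

section \<open>Lie algebras and evaluation of expressions\<close>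

text \<open>Generators outside the carrier evaluate to zero, as in the junk relations of tsq_rel.\<close>

fun interp :: "('r::comm_ring_1, 'a) liealg \<Rightarrow> ('r, 'a) expr \<Rightarrow> 'a" where
  "interp L (EGen x) = (if x \<in> lcarrier L then x else lzero L)"
| "interp L EZero = lzero L"
| "interp L (EAdd a b) = ladd L (interp L a) (interp L b)"
| "interp L (ESmul r a) = lsmult L r (interp L a)"
| "interp L (EBrk a b) = lbr L (interp L a) (interp L b)"

definition lincomb_expr :: "('r \<times> 'm) list \<Rightarrow> ('r, 'm) expr" where
  "lincomb_expr xs = foldr (\<lambda>(c, b) acc. EAdd (ESmul c (EGen b)) acc) xs EZero"

lemma lincomb_expr_simps [simp]:
  "lincomb_expr [] = EZero"
  "lincomb_expr ((c, b) # xs) = EAdd (ESmul c (EGen b)) (lincomb_expr xs)"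
  by (simp_all add: lincomb_expr_def)

lemma atoms_lincomb_expr: "atoms (lincomb_expr xs) = map (\<lambda>(c, b). EGen b) xs"
  by (induction xs) auto

locale lie_algebra =
  fixes L :: "('r::comm_ring_1, 'a) liealg"
  assumes is_lie: "is_lie L"
begin

lemma
  shows zero_closed: "lzero L \<in> lcarrier L"
    and add_closed: "x \<in> lcarrier L \<Longrightarrow> y \<in> lcarrier L \<Longrightarrow> ladd L x y \<in> lcarrier L"
    and smult_closed: "x \<in> lcarrier L \<Longrightarrow> lsmult L r x \<in> lcarrier L"
    and bracket_closed: "x \<in> lcarrier L \<Longrightarrow> y \<in> lcarrier L \<Longrightarrow> lbr L x y \<in> lcarrier L"
  using is_lie unfolding is_lie_def by (-, (blast | meson)+)

lemmas closed = zero_closed add_closed smult_closed bracket_closed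

lemma
  fixes x y z
  defines "C \<equiv> lcarrier L"
  shows add_assoc: "x \<in> C \<Longrightarrow> y \<in> C \<Longrightarrow> z \<in> C \<Longrightarrow> ladd L (ladd L x y) z = ladd L x (ladd L y z)"
    and add_commute: "x \<in> C \<Longrightarrow> y \<in> C \<Longrightarrow> ladd L x y = ladd L y x"
    and add_zero: "x \<in> C \<Longrightarrow> ladd L x (lzero L) = x"
    and add_neg: "x \<in> C \<Longrightarrow> ladd L x (lsmult L (-1) x) = lzero L"
    and smult_add: "x \<in> C \<Longrightarrow> y \<in> C \<Longrightarrow>
      lsmult L r (ladd L x y) = ladd L (lsmult L r x) (lsmult L r y)"
    and add_smult: "x \<in> C \<Longrightarrow> lsmult L (r + s) x = ladd L (lsmult L r x) (lsmult L s x)"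
    and mult_smult: "x \<in> C \<Longrightarrow> lsmult L (r * s) x = lsmult L r (lsmult L s x)"
    and one_smult: "x \<in> C \<Longrightarrow> lsmult L 1 x = x"
    and bracket_add_left: "x \<in> C \<Longrightarrow> y \<in> C \<Longrightarrow> z \<in> C \<Longrightarrow>
      lbr L (ladd L x y) z = ladd L (lbr L x z) (lbr L y z)"
    and bracket_add_right: "x \<in> C \<Longrightarrow> y \<in> C \<Longrightarrow> z \<in> C \<Longrightarrow>
      lbr L x (ladd L y z) = ladd L (lbr L x y) (lbr L x z)"
    and bracket_smult_left: "x \<in> C \<Longrightarrow> y \<in> C \<Longrightarrow>
      lbr L (lsmult L r x) y = lsmult L r (lbr L x y)"
    and bracket_smult_right: "x \<in> C \<Longrightarrow> y \<in> C \<Longrightarrow>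
      lbr L x (lsmult L r y) = lsmult L r (lbr L x y)"
    and bracket_self: "x \<in> C \<Longrightarrow> lbr L x x = lzero L"
    and jacobi: "x \<in> C \<Longrightarrow> y \<in> C \<Longrightarrow> z \<in> C \<Longrightarrow>
      ladd L (lbr L x (lbr L y z)) (ladd L (lbr L y (lbr L z x)) (lbr L z (lbr L x y))) = lzero L"
  using is_lie unfolding is_lie_def C_def by (-, (blast | meson)+)

lemma interp_closed: "interp L a \<in> lcarrier L"
  by (induction a) (auto simp: closed)

lemma interp_eq_if_lie_cong: "lie_cong {} a b \<Longrightarrow> interp L a = interp L b"
  by (induction rule: lie_cong.induct)
    (auto simp: interp_closed add_assoc add_commute add_zero add_neg smult_add add_smult
      mult_smult one_smult bracket_add_left bracket_add_right bracket_smult_left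
      bracket_smult_right bracket_self jacobi)

lemma interp_eq_if_atom_coeff_eq: "atom_coeff a = atom_coeff b \<Longrightarrow> interp L a = interp L b"
  using interp_eq_if_lie_cong lie_cong_if_atom_coeff_eq by blast

lemma smult_zero: "lsmult L r (lzero L) = lzero L"
  using interp_eq_if_atom_coeff_eq[of "ESmul r EZero" EZero] by (simp add: fun_eq_iff)

lemma zero_smult: "x \<in> lcarrier L \<Longrightarrow> lsmult L 0 x = lzero L"
  using interp_eq_if_atom_coeff_eq[of "ESmul 0 (EGen x)" EZero] by (simp add: fun_eq_iff)

lemma zero_add: "x \<in> lcarrier L \<Longrightarrow> ladd L (lzero L) x = x"
  using add_commute add_zero zero_closed by metis

lemma add_left_commute:
  "x \<in> lcarrier L \<Longrightarrow> y \<in> lcarrier L \<Longrightarrow> z \<in> lcarrier L \<Longrightarrow>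
   ladd L x (ladd L y z) = ladd L y (ladd L x z)"
  by (metis add_assoc add_commute)

lemma bracket_anticommute:
  assumes x: "x \<in> lcarrier L" and y: "y \<in> lcarrier L"
  shows "lbr L y x = lsmult L (-1) (lbr L x y)"
proof -
  have "lzero L = lbr L (ladd L x y) (ladd L x y)" using x y by (simp add: bracket_self closed)
  also have "\<dots> = ladd L (ladd L (lbr L x x) (lbr L y x)) (ladd L (lbr L x y) (lbr L y y))"
    using x y by (simp add: bracket_add_left bracket_add_right closed)
  also have "\<dots> = ladd L (lbr L y x) (lbr L x y)"
    using x y by (simp add: bracket_self closed zero_add add_zero)
  finally have sum: "ladd L (lbr L y x) (lbr L x y) = lzero L" by simp
  have "interp L (EGen (lbr L y x)) =
        interp L (EAdd (EAdd (EGen (lbr L y x)) (EGen (lbr L x y))) (ESmul (-1) (EGen (lbr L x y))))"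
    by (rule interp_eq_if_atom_coeff_eq) (simp add: fun_eq_iff)
  then show ?thesis using x y sum by (simp add: closed zero_add)
qed

lemma lincomb_eq_interp:
  "set (map snd xs) \<subseteq> lcarrier L \<Longrightarrow> lincomb L xs = interp L (lincomb_expr xs)"
  by (induction xs) (auto simp: lincomb_def)

end

section \<open>Quotients by submodules containing all brackets\<close>

definition submodule :: "('r::comm_ring_1, 'a) liealg \<Rightarrow> 'a set \<Rightarrow> bool" where
  "submodule L N \<longleftrightarrow> N \<subseteq> lcarrier L \<and> lzero L \<in> N \<and> (\<forall>x\<in>N. \<forall>y\<in>N. ladd L x y \<in> N)
     \<and> (\<forall>r. \<forall>x\<in>N. lsmult L r x \<in> N)"

lemma bracket_in_sharp: "x \<in> lcarrier L \<Longrightarrow> y \<in> lcarrier L \<Longrightarrow> lbr L x y \<in> sharp L q"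
  unfolding sharp_def by (rule sg_gen) blast

context lie_algebra
begin

lemma submod_gen_subset: "S \<subseteq> lcarrier L \<Longrightarrow> submod_gen L S \<subseteq> lcarrier L"
proof
  fix x assume "S \<subseteq> lcarrier L" "x \<in> submod_gen L S"
  then show "x \<in> lcarrier L" by (induction rule: submod_gen.induct[OF \<open>x \<in> _\<close>]) (auto simp: closed)
qed

lemma submodule_submod_gen: "S \<subseteq> lcarrier L \<Longrightarrow> submodule L (submod_gen L S)"
  unfolding submodule_def using submod_gen_subset by (auto intro: submod_gen.intros)

lemma submodule_sharp: "submodule L (sharp L q)"
  unfolding sharp_def by (rule submodule_submod_gen) (auto simp: closed)

end

locale lie_submodule = lie_algebra +
  fixes N :: "'a set"
  assumes submodule: "submodule L N"
begin

lemma
  shows submodule_subset: "x \<in> N \<Longrightarrow> x \<in> lcarrier L"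
    and zero_in_submodule: "lzero L \<in> N"
    and add_in_submodule: "x \<in> N \<Longrightarrow> y \<in> N \<Longrightarrow> ladd L x y \<in> N"
    and smult_in_submodule: "x \<in> N \<Longrightarrow> lsmult L r x \<in> N"
  using submodule unfolding submodule_def by (-, blast+)

lemma self_in_coset: "x \<in> lcarrier L \<Longrightarrow> x \<in> coset L N x"
  unfolding coset_def using add_zero zero_in_submodule by force

lemma coset_eq_iff:
  assumes x: "x \<in> lcarrier L" and y: "y \<in> lcarrier L"
  shows "coset L N x = coset L N y \<longleftrightarrow> ladd L x (lsmult L (-1) y) \<in> N"
proof
  assume "coset L N x = coset L N y"
  then obtain n where n: "n \<in> N" "x = ladd L y n"
    using self_in_coset[OF x] unfolding coset_def by auto
  have "interp L (EAdd (EAdd (EGen y) (EGen n)) (ESmul (-1) (EGen y))) = interp L (EGen n)"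
    by (rule interp_eq_if_atom_coeff_eq) (simp add: fun_eq_iff)
  then show "ladd L x (lsmult L (-1) y) \<in> N" using n y submodule_subset by simp
next
  assume diff: "ladd L x (lsmult L (-1) y) \<in> N"
  have "z \<in> coset L N y" if "z \<in> coset L N x" for z
  proof -
    from that obtain n where n: "n \<in> N" "z = ladd L x n" unfolding coset_def by auto
    have "interp L (EAdd (EGen x) (EGen n)) =
          interp L (EAdd (EGen y) (EAdd (EAdd (EGen x) (ESmul (-1) (EGen y))) (EGen n)))"
      by (rule interp_eq_if_atom_coeff_eq) (simp add: fun_eq_iff)
    then have "z = ladd L y (ladd L (ladd L x (lsmult L (-1) y)) n)"
      using n x y submodule_subset by simp
    then show ?thesis unfolding coset_def using add_in_submodule[OF diff n(1)] by blast
  qed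
  moreover have "z \<in> coset L N x" if "z \<in> coset L N y" for z
  proof -
    from that obtain n where n: "n \<in> N" "z = ladd L y n" unfolding coset_def by auto
    have "interp L (EAdd (EGen y) (EGen n)) = interp L (EAdd (EGen x)
            (EAdd (ESmul (-1) (EAdd (EGen x) (ESmul (-1) (EGen y)))) (EGen n)))"
      by (rule interp_eq_if_atom_coeff_eq) (simp add: fun_eq_iff)
    then have "z = ladd L x (ladd L (lsmult L (-1) (ladd L x (lsmult L (-1) y))) n)"
      using n x y submodule_subset by simp
    then show ?thesis
      unfolding coset_def using add_in_submodule[OF smult_in_submodule[OF diff] n(1)] by blast
  qed
  ultimately show "coset L N x = coset L N y" by blast
qed

lemma coset_add_submodule: "x \<in> lcarrier L \<Longrightarrow> n \<in> N \<Longrightarrow> coset L N (ladd L x n) = coset L N x"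
  using coset_eq_iff interp_eq_if_atom_coeff_eq
    [of "EAdd (EAdd (EGen x) (EGen n)) (ESmul (-1) (EGen x))" "EGen n"]
  by (simp add: fun_eq_iff closed submodule_subset)

lemma rep_coset: "x \<in> lcarrier L \<Longrightarrow> \<exists>n\<in>N. rep (coset L N x) = ladd L x n"
  using someI[of "\<lambda>y. y \<in> coset L N x", OF self_in_coset] unfolding rep_def coset_def by auto

lemma rep_coset_closed: "x \<in> lcarrier L \<Longrightarrow> rep (coset L N x) \<in> lcarrier L"
  using rep_coset submodule_subset closed by metis

lemma coset_rep_coset: "x \<in> lcarrier L \<Longrightarrow> coset L N (rep (coset L N x)) = coset L N x"
  using rep_coset coset_add_submodule by metis

lemma quot_carrier: "lcarrier (quot L N) = coset L N ` lcarrier L"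
  by (simp add: quot_def)

lemma quot_zero: "lzero (quot L N) = coset L N (lzero L)"
  by (simp add: quot_def)

lemma quot_add:
  assumes x: "x \<in> lcarrier L" and y: "y \<in> lcarrier L"
  shows "ladd (quot L N) (coset L N x) (coset L N y) = coset L N (ladd L x y)"
proof -
  obtain n m where n: "n \<in> N" "rep (coset L N x) = ladd L x n"
    and m: "m \<in> N" "rep (coset L N y) = ladd L y m"
    using rep_coset x y by metis
  have "interp L (EAdd (EAdd (EGen x) (EGen n)) (EAdd (EGen y) (EGen m))) =
        interp L (EAdd (EAdd (EGen x) (EGen y)) (EAdd (EGen n) (EGen m)))"
    by (rule interp_eq_if_atom_coeff_eq) (simp add: fun_eq_iff)
  then show ?thesis
    using n m x y coset_add_submodule add_in_submodule submodule_subset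
    by (simp add: quot_def closed)
qed

lemma quot_smult:
  assumes x: "x \<in> lcarrier L"
  shows "lsmult (quot L N) r (coset L N x) = coset L N (lsmult L r x)"
proof -
  obtain n where n: "n \<in> N" "rep (coset L N x) = ladd L x n" using rep_coset x by blast
  then show ?thesis
    using x coset_add_submodule smult_in_submodule submodule_subset
    by (simp add: quot_def smult_add closed)
qed

lemma quot_bracket:
  assumes brackets: "\<And>x y. x \<in> lcarrier L \<Longrightarrow> y \<in> lcarrier L \<Longrightarrow> lbr L x y \<in> N"
    and x: "x \<in> lcarrier L" and y: "y \<in> lcarrier L"
  shows "lbr (quot L N) (coset L N x) (coset L N y) = lzero (quot L N)"
proof -
  let ?b = "lbr L (rep (coset L N x)) (rep (coset L N y))"
  have b: "?b \<in> N" using brackets rep_coset_closed x y by blast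
  then have "coset L N (ladd L (lzero L) ?b) = coset L N (lzero L)"
    by (rule coset_add_submodule[OF zero_closed])
  then show ?thesis using b submodule_subset by (simp add: quot_def zero_add)
qed

lemma quot_is_lie:
  assumes brackets: "\<And>x y. x \<in> lcarrier L \<Longrightarrow> y \<in> lcarrier L \<Longrightarrow> lbr L x y \<in> N"
  shows "is_lie (quot L N)"
  unfolding is_lie_def quot_carrier
  by (simp add: quot_zero quot_add quot_smult quot_bracket[OF brackets] closed smult_zero
      add_assoc add_commute add_left_commute add_zero add_neg smult_add add_smult mult_smult
      one_smult)

lemma coset_interp_esum:
  assumes "\<And>i. i < m \<Longrightarrow> e i \<in> lcarrier L"
  shows "coset L N (interp L (esum m (\<lambda>i. ESmul (f i) (EGen (e i))))) =
         interp (quot L N) (esum m (\<lambda>i. ESmul (f i) (EGen (coset L N (e i)))))"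
  using assms
proof (induction m)
  case 0
  then show ?case by (simp add: quot_zero)
next
  case (Suc m)
  then show ?case
    using interp_closed by (simp add: quot_carrier quot_add[symmetric] quot_smult closed)
qed

end

section \<open>Coordinates in a free module over \<Lambda>/q\<Lambda>\<close>

definition free_basis :: "('r::comm_ring_1, 'm) liealg \<Rightarrow> nat \<Rightarrow> 'm set \<Rightarrow> bool" where
  "free_basis M q B \<longleftrightarrow> B \<subseteq> lcarrier M \<and>
     (\<forall>x\<in>lcarrier M. \<exists>xs. set (map snd xs) \<subseteq> B \<and> x = lincomb M xs) \<and>
     (\<forall>xs. set (map snd xs) \<subseteq> B \<longrightarrow> distinct (map snd xs) \<longrightarrow>
            lincomb M xs = lzero M \<longrightarrow> (\<forall>c\<in>set (map fst xs). (of_nat q :: 'r) dvd c))"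

lemma free_mod_q_iff: "free_mod_q M q \<longleftrightarrow> (\<exists>B. free_basis M q B)"
  unfolding free_mod_q_def free_basis_def by blast

definition expr_over :: "'m set \<Rightarrow> ('r, 'm) expr \<Rightarrow> bool" where
  "expr_over B e \<longleftrightarrow> set (atoms e) \<subseteq> EGen ` B"

lemma atom_coeff_lincomb_expr_distinct:
  "distinct ds \<Longrightarrow>
   atom_coeff (lincomb_expr (map (\<lambda>d. (f d, d)) ds)) (EGen b) = (if b \<in> set ds then f b else 0)"
  by (induction ds) auto

lemma sum_nth_distinct: "distinct ds \<Longrightarrow> (\<Sum>i<length ds. g (ds ! i)) = (\<Sum>d\<in>set ds. g d)"
  by (simp add: sum.distinct_set_conv_list sum_list_sum_nth atLeast0LessThan)

lemma atom_coeff_esum_distinct: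
  assumes "distinct ds"
  shows "atom_coeff (esum (length ds) (\<lambda>i. ESmul (f (ds ! i)) (EGen (ds ! i)))) (EGen b) =
         (if b \<in> set ds then f b else 0)"
proof -
  have "atom_coeff (esum (length ds) (\<lambda>i. ESmul (f (ds ! i)) (EGen (ds ! i)))) (EGen b) =
        (\<Sum>i<length ds. (\<lambda>d. if d = b then f d else 0) (ds ! i))"
    by (auto simp: atom_coeff_esum intro!: sum.cong)
  also have "\<dots> = (\<Sum>d\<in>set ds. if d = b then f d else 0)"
    using assms by (rule sum_nth_distinct)
  finally show ?thesis by (simp add: sum.delta')
qed

locale free_module = lie_algebra M for M :: "('r::comm_ring_1, 'm) liealg" +
  fixes q :: nat and B :: "'m set"
  assumes free_basis: "free_basis M q B"
begin

lemma basis_subset: "B \<subseteq> lcarrier M"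
  using free_basis unfolding free_basis_def by blast

lemma spanned_by_basis: "A \<in> lcarrier M \<Longrightarrow> \<exists>e. expr_over B e \<and> interp M e = A"
proof -
  assume "A \<in> lcarrier M"
  then obtain xs where xs: "set (map snd xs) \<subseteq> B" "A = lincomb M xs"
    using free_basis unfolding free_basis_def by blast
  then have "expr_over B (lincomb_expr xs) \<and> interp M (lincomb_expr xs) = A"
    using basis_subset lincomb_eq_interp by (auto simp: expr_over_def atoms_lincomb_expr)
  then show ?thesis by blast
qed

lemma independent_mod_q:
  "set (map snd xs) \<subseteq> B \<Longrightarrow> distinct (map snd xs) \<Longrightarrow> lincomb M xs = lzero M \<Longrightarrow>
   c \<in> set (map fst xs) \<Longrightarrow> (of_nat q :: 'r) dvd c"
  using free_basis unfolding free_basis_def by blast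

lemma coeffs_dvd_if_interp_zero:
  assumes e: "expr_over B e" and zero: "interp M e = lzero M"
  shows "(of_nat q :: 'r) dvd atom_coeff e (EGen b)"
proof -
  have "finite (EGen -` set (atoms e))" by (rule finite_vimageI) (simp_all add: inj_def)
  then obtain ds where ds: "distinct ds" "set ds = EGen -` set (atoms e)"
    by (metis finite_distinct_list)
  define xs where "xs = map (\<lambda>d. (atom_coeff e (EGen d), d)) ds"
  have snd_xs: "map snd xs = ds" by (simp add: xs_def o_def)
  have dsB: "set ds \<subseteq> B" using e ds(2) by (auto simp: expr_over_def)
  have "atom_coeff (lincomb_expr xs) = atom_coeff e"
  proof
    fix t
    show "atom_coeff (lincomb_expr xs) t = atom_coeff e t"
    proof (cases "t \<in> range EGen")
      case True
      then obtain d where t: "t = EGen d" by blast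
      show ?thesis
        using ds atom_coeff_notin_atoms[of t e]
        by (simp add: t xs_def atom_coeff_lincomb_expr_distinct)
    next
      case False
      then have "t \<notin> set (atoms (lincomb_expr xs))" "t \<notin> set (atoms e)"
        using e by (auto simp: xs_def atoms_lincomb_expr expr_over_def)
      then show ?thesis by (simp add: atom_coeff_notin_atoms)
    qed
  qed
  moreover have "set (map snd xs) \<subseteq> lcarrier M" using dsB basis_subset snd_xs by simp
  ultimately have "lincomb M xs = interp M e"
    using lincomb_eq_interp interp_eq_if_atom_coeff_eq by metis
  then have "lincomb M xs = lzero M" using zero by simp
  then have "(of_nat q :: 'r) dvd c" if "c \<in> set (map fst xs)" for c
    using independent_mod_q[of xs c, unfolded snd_xs] that dsB ds(1) by blast
  then show ?thesis
    using ds(2) atom_coeff_notin_atoms[of "EGen b" e]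
    by (cases "EGen b \<in> set (atoms e)") (auto simp: xs_def)
qed

lemma coeff_diff_dvd_if_interp_eq:
  assumes "expr_over B e" "expr_over B e'" "interp M e = interp M e'"
  shows "(of_nat q :: 'r) dvd (atom_coeff e (EGen b) - atom_coeff e' (EGen b))"
proof -
  have "interp M (EAdd e (ESmul (-1) e')) = lzero M"
    using assms(3) add_neg interp_closed by simp
  then have "(of_nat q :: 'r) dvd atom_coeff (EAdd e (ESmul (-1) e')) (EGen b)"
    using assms(1,2) by (intro coeffs_dvd_if_interp_zero) (auto simp: expr_over_def)
  then show ?thesis by simp
qed

definition basis_expr :: "'m \<Rightarrow> ('r, 'm) expr" where
  "basis_expr A = (SOME e. expr_over B e \<and> interp M e = A)"

lemma basis_expr: "A \<in> lcarrier M \<Longrightarrow> expr_over B (basis_expr A) \<and> interp M (basis_expr A) = A"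
  unfolding basis_expr_def using spanned_by_basis by (rule someI_ex)

definition coord :: "'m \<Rightarrow> 'm \<Rightarrow> 'r" where
  "coord b A = atom_coeff (basis_expr A) (EGen b)"

definition support :: "'m \<Rightarrow> 'm set" where
  "support A = EGen -` set (atoms (basis_expr A))"

lemma support_subset: "A \<in> lcarrier M \<Longrightarrow> support A \<subseteq> B"
  using basis_expr unfolding support_def expr_over_def by blast

lemma finite_support: "finite (support A)"
  unfolding support_def by (rule finite_vimageI) (simp_all add: inj_def)

lemma coord_eq_zero: "b \<notin> support A \<Longrightarrow> coord b A = 0"
  unfolding coord_def support_def by (simp add: atom_coeff_notin_atoms)

lemma coord_dvd_diff:
  assumes "A \<in> lcarrier M" "expr_over B e" "interp M e = A"
  shows "(of_nat q :: 'r) dvd (coord b A - atom_coeff e (EGen b))"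
  unfolding coord_def using assms basis_expr by (intro coeff_diff_dvd_if_interp_eq) auto

lemma coord_add:
  assumes "A \<in> lcarrier M" "A' \<in> lcarrier M"
  shows "(of_nat q :: 'r) dvd (coord b (ladd M A A') - (coord b A + coord b A'))"
  using coord_dvd_diff[of "ladd M A A'" "EAdd (basis_expr A) (basis_expr A')" b] assms basis_expr
  by (simp add: expr_over_def closed coord_def)

lemma coord_smult:
  assumes "A \<in> lcarrier M"
  shows "(of_nat q :: 'r) dvd (coord b (lsmult M r A) - r * coord b A)"
  using coord_dvd_diff[of "lsmult M r A" "ESmul r (basis_expr A)" b] assms basis_expr
  by (simp add: expr_over_def closed coord_def)

lemma coord_zero: "(of_nat q :: 'r) dvd coord b (lzero M)"
  using coord_dvd_diff[of "lzero M" EZero b] by (simp add: expr_over_def zero_closed)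

lemma interp_coords:
  assumes A: "A \<in> lcarrier M" and ds: "distinct ds" "support A \<subseteq> set ds"
  shows "interp M (esum (length ds) (\<lambda>i. ESmul (coord (ds ! i) A) (EGen (ds ! i)))) = A"
proof -
  have "atom_coeff (esum (length ds) (\<lambda>i. ESmul (coord (ds ! i) A) (EGen (ds ! i)))) =
        atom_coeff (basis_expr A)"
  proof
    fix t
    show "atom_coeff (esum (length ds) (\<lambda>i. ESmul (coord (ds ! i) A) (EGen (ds ! i)))) t =
          atom_coeff (basis_expr A) t"
    proof (cases "t \<in> range EGen")
      case True
      then obtain d where t: "t = EGen d" by blast
      have "atom_coeff (esum (length ds) (\<lambda>i. ESmul (coord (ds ! i) A) (EGen (ds ! i)))) (EGen d) =
            (if d \<in> set ds then coord d A else 0)"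
        by (rule atom_coeff_esum_distinct[OF ds(1)])
      also have "\<dots> = coord d A" using coord_eq_zero ds(2) by auto
      finally show ?thesis by (simp add: t coord_def)
    next
      case False
      then have "t \<notin> set (atoms (basis_expr A))"
        using basis_expr[OF A] by (auto simp: expr_over_def)
      moreover have "t \<noteq> EGen d" for d using False by blast
      ultimately show ?thesis by (simp add: atom_coeff_esum atom_coeff_notin_atoms)
    qed
  qed
  then show ?thesis using basis_expr[OF A] interp_eq_if_atom_coeff_eq by metis
qed

end

section \<open>Bilinear functionals on the tensor square of an abelian Lie algebra\<close>

lemma tsq_relE:
  assumes "(a, b) \<in> tsq_rel L q"
  obtains
    (junk) x where "a = EGen x" "b = EZero" "x \<notin> tsq_gens L q"
  | (r1a) r h g where "a = ESmul r (T h g)" "b = T (lsmult L r h) g"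
      "h \<in> lcarrier L" "g \<in> lcarrier L"
  | (r1b) r h g where "a = ESmul r (T h g)" "b = T h (lsmult L r g)"
      "h \<in> lcarrier L" "g \<in> lcarrier L"
  | (r2) h h' g where "a = T (ladd L h h') g" "b = EAdd (T h g) (T h' g)"
      "h \<in> lcarrier L" "h' \<in> lcarrier L" "g \<in> lcarrier L"
  | (r3) h g g' where "a = T h (ladd L g g')" "b = EAdd (T h g) (T h g')"
      "h \<in> lcarrier L" "g \<in> lcarrier L" "g' \<in> lcarrier L"
  | (r4) h h' g where "a = T (lbr L h h') g"
      "b = EAdd (T h (lbr L h' g)) (ESmul (-1) (T h' (lbr L h g)))"
      "h \<in> lcarrier L" "h' \<in> lcarrier L" "g \<in> lcarrier L"
  | (r5) h g g' where "a = T h (lbr L g g')"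
      "b = EAdd (T (lbr L g' h) g) (ESmul (-1) (T (lbr L g h) g'))"
      "h \<in> lcarrier L" "g \<in> lcarrier L" "g' \<in> lcarrier L"
  | (r6) h g h' g' where "a = EBrk (T h g) (T h' g')" "b = T (lbr L h g) (lbr L h' g')"
      "h \<in> lcarrier L" "g \<in> lcarrier L" "h' \<in> lcarrier L" "g' \<in> lcarrier L"
  | (r7) h' h g where "a = EBrk (Cu h') (T h g)"
      "b = EAdd (T (lbr L (lsmult L (of_nat q) h') h) g) (T h (lbr L (lsmult L (of_nat q) h') g))"
      "h' \<in> lcarrier L" "h \<in> lcarrier L" "g \<in> lcarrier L"
  | (r8) r r' h h' where "a = Cu (ladd L (lsmult L r h) (lsmult L r' h'))"
      "b = EAdd (ESmul r (Cu h)) (ESmul r' (Cu h'))"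
  | (r9) h h' where "a = EBrk (Cu h) (Cu h')" "b = T (lsmult L (of_nat q) h) (lsmult L (of_nat q) h')"
      "h \<in> lcarrier L" "h' \<in> lcarrier L"
  | (r10) h g where "a = Cu (lbr L h g)" "b = ESmul (of_nat q) (T h g)"
      "h \<in> lcarrier L" "g \<in> lcarrier L"
  using assms unfolding tsq_rel_def by (auto split: if_splits)

definition linear_mod :: "('r::comm_ring_1, 'm) liealg \<Rightarrow> nat \<Rightarrow> ('m \<Rightarrow> 'r) \<Rightarrow> bool" where
  "linear_mod M q c \<longleftrightarrow>
     (\<forall>A\<in>lcarrier M. \<forall>A'\<in>lcarrier M. of_nat q dvd (c (ladd M A A') - (c A + c A'))) \<and>
     (\<forall>r. \<forall>A\<in>lcarrier M. of_nat q dvd (c (lsmult M r A) - r * c A)) \<and>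
     of_nat q dvd c (lzero M)"

lemma (in free_module) linear_mod_coord: "linear_mod M q (coord b)"
  unfolding linear_mod_def using coord_add coord_smult coord_zero by blast

text \<open>Brackets and curly generators are sent to zero; as M is abelian, relations (6)--(10)
  still hold modulo q.\<close>

fun bilin_eval :: "('m \<Rightarrow> 'r::comm_ring_1) \<Rightarrow> ('m \<Rightarrow> 'r) \<Rightarrow> 'm set \<Rightarrow> ('r, 'm tgen) expr \<Rightarrow> 'r" where
  "bilin_eval c1 c2 C (EGen (Tens A A')) = (if A \<in> C \<and> A' \<in> C then c1 A * c2 A' else 0)"
| "bilin_eval c1 c2 C (EGen (Curly A)) = 0"
| "bilin_eval c1 c2 C EZero = 0"
| "bilin_eval c1 c2 C (EAdd a b) = bilin_eval c1 c2 C a + bilin_eval c1 c2 C b"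
| "bilin_eval c1 c2 C (ESmul r a) = r * bilin_eval c1 c2 C a"
| "bilin_eval c1 c2 C (EBrk a b) = 0"

lemma dvd_diff_mult_left: "(k::'r::comm_ring_1) dvd (x - y) \<Longrightarrow> k dvd (z * x - z * y)"
  by (metis dvd_mult right_diff_distrib)

locale abelian_bilinear_mod = lie_algebra M for M :: "('r::comm_ring_1, 'm) liealg" +
  fixes q :: nat and c1 c2 :: "'m \<Rightarrow> 'r"
  assumes abelian: "A \<in> lcarrier M \<Longrightarrow> A' \<in> lcarrier M \<Longrightarrow> lbr M A A' = lzero M"
    and linear1: "linear_mod M q c1" and linear2: "linear_mod M q c2"
begin

abbreviation (input) qr :: 'r where "qr \<equiv> of_nat q"

lemma linear_mod_add:
  "linear_mod M q c \<Longrightarrow> A \<in> lcarrier M \<Longrightarrow> A' \<in> lcarrier M \<Longrightarrow>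
   qr dvd (c (ladd M A A') - (c A + c A'))"
  unfolding linear_mod_def by blast

lemma linear_mod_smult:
  "linear_mod M q c \<Longrightarrow> A \<in> lcarrier M \<Longrightarrow> qr dvd (c (lsmult M r A) - r * c A)"
  unfolding linear_mod_def by blast

lemma linear_mod_bracket:
  "linear_mod M q c \<Longrightarrow> A \<in> lcarrier M \<Longrightarrow> A' \<in> lcarrier M \<Longrightarrow> qr dvd c (lbr M A A')"
  unfolding linear_mod_def by (simp add: abelian)

lemma linear_mod_q_smult: "linear_mod M q c \<Longrightarrow> A \<in> lcarrier M \<Longrightarrow> qr dvd c (lsmult M qr A)"
  using linear_mod_smult[of c A qr] by (metis dvd_add dvd_triv_left diff_add_cancel)

abbreviation \<beta> :: "('r, 'm tgen) expr \<Rightarrow> 'r" where "\<beta> \<equiv> bilin_eval c1 c2 (lcarrier M)"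

lemma bilin_eval_tsq_rel_dvd:
  assumes "(a, b) \<in> tsq_rel M q"
  shows "qr dvd (\<beta> a - \<beta> b)"
  using assms
proof (cases rule: tsq_relE)
  case (junk x)
  then show ?thesis by (cases x) (auto simp: tsq_gens_def)
next
  case (r1a r h g)
  then have "\<beta> a - \<beta> b = (r * c1 h - c1 (lsmult M r h)) * c2 g"
    by (simp add: closed algebra_simps)
  moreover have "qr dvd (r * c1 h - c1 (lsmult M r h))"
    using linear_mod_smult[OF linear1 r1a(3), of r] by (metis dvd_minus_iff minus_diff_eq)
  ultimately show ?thesis by simp
next
  case (r1b r h g)
  then have "\<beta> a - \<beta> b = c1 h * (r * c2 g - c2 (lsmult M r g))"
    by (simp add: closed algebra_simps)
  moreover have "qr dvd (r * c2 g - c2 (lsmult M r g))"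
    using linear_mod_smult[OF linear2 r1b(4), of r] by (metis dvd_minus_iff minus_diff_eq)
  ultimately show ?thesis by simp
next
  case (r2 h h' g)
  then have "\<beta> a - \<beta> b = (c1 (ladd M h h') - (c1 h + c1 h')) * c2 g"
    by (simp add: closed algebra_simps)
  then show ?thesis using linear_mod_add[OF linear1 r2(3,4)] by simp
next
  case (r3 h g g')
  then have "\<beta> a - \<beta> b = c1 h * (c2 (ladd M g g') - (c2 g + c2 g'))"
    by (simp add: closed algebra_simps)
  then show ?thesis using linear_mod_add[OF linear2 r3(4,5)] by simp
next
  case (r4 h h' g)
  then show ?thesis
    using linear_mod_bracket[OF linear1 r4(3,4)] linear_mod_bracket[OF linear2 r4(4,5)]
      linear_mod_bracket[OF linear2 r4(3,5)]
    by (simp add: closed dvd_diff dvd_add dvd_mult dvd_mult2)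
next
  case (r5 h g g')
  then show ?thesis
    using linear_mod_bracket[OF linear2 r5(4,5)] linear_mod_bracket[OF linear1 r5(5,3)]
      linear_mod_bracket[OF linear1 r5(4,3)]
    by (simp add: closed dvd_diff dvd_add dvd_mult dvd_mult2)
next
  case (r6 h g h' g')
  then show ?thesis using linear_mod_bracket[OF linear1 r6(3,4)] by (simp add: closed dvd_mult2)
next
  case (r7 h' h g)
  then have "lsmult M qr h' \<in> lcarrier M" by (simp add: closed)
  then show ?thesis
    using r7 linear_mod_bracket[OF linear1, of "lsmult M qr h'" h]
      linear_mod_bracket[OF linear2, of "lsmult M qr h'" g]
    by (simp add: closed dvd_add dvd_mult dvd_mult2)
next
  case (r9 h h')
  then show ?thesis using linear_mod_q_smult[OF linear1 r9(3)] by (simp add: closed dvd_mult2)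
next
  case r8
  then show ?thesis by simp
next
  case r10
  then show ?thesis by simp
qed

lemma bilin_eval_dvd_if_tsq_eq: "tsq_eq M q a b \<Longrightarrow> qr dvd (\<beta> a - \<beta> b)"
proof (induction rule: lie_cong.induct)
  case (lc_rel a b)
  then show ?case by (rule bilin_eval_tsq_rel_dvd)
next
  case (lc_sym a b)
  then show ?case by (metis dvd_minus_iff minus_diff_eq)
next
  case (lc_trans a b c)
  have "\<beta> a - \<beta> c = (\<beta> a - \<beta> b) + (\<beta> b - \<beta> c)" by simp
  then show ?case using lc_trans by (metis dvd_add)
next
  case (lc_add a a' b b')
  have "\<beta> (EAdd a b) - \<beta> (EAdd a' b') = (\<beta> a - \<beta> a') + (\<beta> b - \<beta> b')" by simp
  then show ?case using lc_add by (metis dvd_add)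
next
  case (lc_smul a a' r)
  then show ?case by (simp add: dvd_diff_mult_left)
qed (simp_all add: algebra_simps)

end

section \<open>Identities in the non-abelian q-tensor square\<close>

locale q_tensor_square = lie_algebra L for L :: "('r::comm_ring_1, 'a) liealg" +
  fixes q :: nat
begin

abbreviation tsq_cong (infix "\<approx>" 50) where "a \<approx> b \<equiv> tsq_eq L q a b"

abbreviation (input) qr :: 'r where "qr \<equiv> of_nat q"

abbreviation sym_tensor :: "'a \<Rightarrow> 'a \<Rightarrow> ('r, 'a tgen) expr" where
  "sym_tensor x y \<equiv> EAdd (T x y) (T y x)"

lemma
  fixes h h' g g' :: 'a
  defines "C \<equiv> lcarrier L"
  shows smult_tensor_left: "h \<in> C \<Longrightarrow> g \<in> C \<Longrightarrow> ESmul r (T h g) \<approx> T (lsmult L r h) g"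
    and smult_tensor_right: "h \<in> C \<Longrightarrow> g \<in> C \<Longrightarrow> ESmul r (T h g) \<approx> T h (lsmult L r g)"
    and tensor_add_left: "h \<in> C \<Longrightarrow> h' \<in> C \<Longrightarrow> g \<in> C \<Longrightarrow>
      T (ladd L h h') g \<approx> EAdd (T h g) (T h' g)"
    and tensor_add_right: "h \<in> C \<Longrightarrow> g \<in> C \<Longrightarrow> g' \<in> C \<Longrightarrow>
      T h (ladd L g g') \<approx> EAdd (T h g) (T h g')"
    and tensor_bracket_left: "h \<in> C \<Longrightarrow> h' \<in> C \<Longrightarrow> g \<in> C \<Longrightarrow>
      T (lbr L h h') g \<approx> EAdd (T h (lbr L h' g)) (ESmul (-1) (T h' (lbr L h g)))"
    and tensor_bracket_right: "h \<in> C \<Longrightarrow> g \<in> C \<Longrightarrow> g' \<in> C \<Longrightarrow>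
      T h (lbr L g g') \<approx> EAdd (T (lbr L g' h) g) (ESmul (-1) (T (lbr L g h) g'))"
    and bracket_tensor_tensor: "h \<in> C \<Longrightarrow> g \<in> C \<Longrightarrow> h' \<in> C \<Longrightarrow> g' \<in> C \<Longrightarrow>
      EBrk (T h g) (T h' g') \<approx> T (lbr L h g) (lbr L h' g')"
    and curly_lincomb: "q \<ge> 1 \<Longrightarrow> h \<in> C \<Longrightarrow> h' \<in> C \<Longrightarrow>
      Cu (ladd L (lsmult L r h) (lsmult L r' h')) \<approx> EAdd (ESmul r (Cu h)) (ESmul r' (Cu h'))"
    and bracket_curly_curly: "q \<ge> 1 \<Longrightarrow> h \<in> C \<Longrightarrow> h' \<in> C \<Longrightarrow>
      EBrk (Cu h) (Cu h') \<approx> T (lsmult L qr h) (lsmult L qr h')"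
    and curly_bracket: "q \<ge> 1 \<Longrightarrow> h \<in> C \<Longrightarrow> g \<in> C \<Longrightarrow> Cu (lbr L h g) \<approx> ESmul qr (T h g)"
  unfolding C_def by (rule lc_rel, auto simp: tsq_rel_def)+

lemma tensor_zero_left:
  assumes g: "g \<in> lcarrier L"
  shows "T (lzero L) g \<approx> EZero"
proof -
  have "T (lzero L) g \<approx> ESmul 0 (T g g)"
    using lc_sym[OF smult_tensor_left[OF g g, of 0]] by (simp add: zero_smult g)
  also have "\<dots> \<approx> EZero" by (rule lie_cong_zero_smul)
  finally show ?thesis .
qed

lemma tensor_zero_right:
  assumes g: "g \<in> lcarrier L"
  shows "T g (lzero L) \<approx> EZero"
proof -
  have "T g (lzero L) \<approx> ESmul 0 (T g g)"
    using lc_sym[OF smult_tensor_right[OF g g, of 0]] by (simp add: zero_smult g)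
  also have "\<dots> \<approx> EZero" by (rule lie_cong_zero_smul)
  finally show ?thesis .
qed

lemma curly_zero: "q \<ge> 1 \<Longrightarrow> Cu (lzero L) \<approx> EZero"
proof -
  assume q: "q \<ge> 1"
  have "Cu (lzero L) = Cu (ladd L (lsmult L 0 (lzero L)) (lsmult L 0 (lzero L)))"
    by (simp add: smult_zero add_zero zero_closed)
  also have "\<dots> \<approx> EAdd (ESmul 0 (Cu (lzero L))) (ESmul 0 (Cu (lzero L)))"
    by (rule curly_lincomb[OF q zero_closed zero_closed])
  also have "\<dots> \<approx> EZero" by (rule lie_cong_if_atom_coeff_eq) (simp add: fun_eq_iff)
  finally show ?thesis .
qed

lemma q_sym_tensor_zero:
  assumes a: "a \<in> lcarrier L" and b: "b \<in> lcarrier L"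
  shows "ESmul qr (sym_tensor a b) \<approx> EZero"
proof (cases "q = 0")
  case True
  then show ?thesis using lie_cong_zero_smul by simp
next
  case False
  then have q: "q \<ge> 1" by simp
  have "ESmul qr (sym_tensor a b) \<approx> EAdd (ESmul qr (T a b)) (ESmul qr (T b a))"
    by (rule lc_smul_add)
  also have "\<dots> \<approx> EAdd (Cu (lbr L a b)) (Cu (lbr L b a))"
    by (rule lc_add; rule lc_sym; rule curly_bracket[OF q]) (simp_all add: a b)
  also have "\<dots> \<approx> EAdd (ESmul 1 (Cu (lbr L a b))) (ESmul 1 (Cu (lbr L b a)))"
    by (rule lie_cong_if_atom_coeff_eq) (simp add: fun_eq_iff)
  also have "\<dots> \<approx> Cu (ladd L (lsmult L 1 (lbr L a b)) (lsmult L 1 (lbr L b a)))"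
    by (rule lc_sym, rule curly_lincomb[OF q]) (simp_all add: a b closed)
  also have "\<dots> = Cu (lzero L)"
    using a b by (simp add: one_smult bracket_anticommute[OF a b] add_neg closed)
  also have "\<dots> \<approx> EZero" by (rule curly_zero[OF q])
  finally show ?thesis .
qed

lemma q_tensor_self_zero: "a \<in> lcarrier L \<Longrightarrow> ESmul qr (T a a) \<approx> EZero"
proof (cases "q = 0")
  case True
  then show ?thesis using lie_cong_zero_smul by simp
next
  case False
  assume a: "a \<in> lcarrier L"
  have "ESmul qr (T a a) \<approx> Cu (lbr L a a)" using False a by (auto intro: lc_sym[OF curly_bracket])
  also have "\<dots> \<approx> EZero" using False a by (simp add: bracket_self curly_zero)
  finally show ?thesis .
qed

abbreviation sym_br :: "'a \<Rightarrow> 'a \<Rightarrow> 'a \<Rightarrow> ('r, 'a tgen) expr" where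
  "sym_br x y z \<equiv> sym_tensor x (lbr L y z)"

lemma sym_br_same:
  assumes x: "x \<in> lcarrier L" and y: "y \<in> lcarrier L"
  shows "sym_br x y x \<approx> EZero"
proof -
  have "T (lbr L y x) x \<approx> EAdd (T y (lzero L)) (ESmul (-1) (T x (lbr L y x)))"
    using tensor_bracket_left[OF y x x] by (simp add: bracket_self x)
  also have "\<dots> \<approx> EAdd EZero (ESmul (-1) (T x (lbr L y x)))"
    by (rule lc_add[OF tensor_zero_right[OF y] lc_refl])
  finally have "sym_br x y x \<approx> EAdd (T x (lbr L y x)) (EAdd EZero (ESmul (-1) (T x (lbr L y x))))"
    by (rule lc_add[OF lc_refl])
  also have "\<dots> \<approx> EZero" by (rule lie_cong_if_atom_coeff_eq) (simp add: fun_eq_iff)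
  finally show ?thesis .
qed

lemma sym_br_swap13:
  assumes x: "x \<in> lcarrier L" and y: "y \<in> lcarrier L" and z: "z \<in> lcarrier L"
  shows "EAdd (sym_br x y z) (sym_br z y x) \<approx> EZero"
proof -
  let ?w = "ladd L x z"
  have yx: "lbr L y x \<in> lcarrier L" and yz: "lbr L y z \<in> lcarrier L" and w: "?w \<in> lcarrier L"
    using x y z by (auto simp: closed)
  have "T ?w (lbr L y ?w) \<approx> EAdd (T x (lbr L y ?w)) (T z (lbr L y ?w))"
    by (rule tensor_add_left[OF x z]) (simp add: y w closed)
  also have "\<dots> \<approx>
      EAdd (EAdd (T x (lbr L y x)) (T x (lbr L y z))) (EAdd (T z (lbr L y x)) (T z (lbr L y z)))"
    unfolding bracket_add_right[OF y x z] by (rule lc_add; rule tensor_add_right) (simp_all add: x z yx yz)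
  finally have left: "T ?w (lbr L y ?w) \<approx>
      EAdd (EAdd (T x (lbr L y x)) (T x (lbr L y z))) (EAdd (T z (lbr L y x)) (T z (lbr L y z)))" .
  have "T (lbr L y ?w) ?w \<approx> EAdd (T (lbr L y x) ?w) (T (lbr L y z) ?w)"
    unfolding bracket_add_right[OF y x z] by (rule tensor_add_left[OF yx yz w])
  also have "\<dots> \<approx>
      EAdd (EAdd (T (lbr L y x) x) (T (lbr L y x) z)) (EAdd (T (lbr L y z) x) (T (lbr L y z) z))"
    by (rule lc_add; rule tensor_add_right) (simp_all add: x z yx yz)
  finally have right: "T (lbr L y ?w) ?w \<approx>
      EAdd (EAdd (T (lbr L y x) x) (T (lbr L y x) z)) (EAdd (T (lbr L y z) x) (T (lbr L y z) z))" .
  have "sym_br ?w y ?w \<approx>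
      EAdd (EAdd (EAdd (T x (lbr L y x)) (T x (lbr L y z))) (EAdd (T z (lbr L y x)) (T z (lbr L y z))))
        (EAdd (EAdd (T (lbr L y x) x) (T (lbr L y x) z)) (EAdd (T (lbr L y z) x) (T (lbr L y z) z)))"
    using left right by (rule lc_add)
  also have "\<dots> \<approx> EAdd (EAdd (sym_br x y x) (sym_br z y z)) (EAdd (sym_br x y z) (sym_br z y x))"
    by (rule lie_cong_if_atom_coeff_eq) (simp add: fun_eq_iff algebra_simps)
  finally have "sym_br ?w y ?w \<approx>
      EAdd (EAdd (sym_br x y x) (sym_br z y z)) (EAdd (sym_br x y z) (sym_br z y x))" .
  then have expanded:
    "EAdd (EAdd (sym_br x y x) (sym_br z y z)) (EAdd (sym_br x y z) (sym_br z y x)) \<approx> EZero"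
    using sym_br_same[OF w y] by (rule lc_trans[OF lc_sym])
  have "EAdd (sym_br x y z) (sym_br z y x) \<approx>
      EAdd (EAdd EZero EZero) (EAdd (sym_br x y z) (sym_br z y x))"
    by (rule lie_cong_if_atom_coeff_eq) (simp add: fun_eq_iff)
  also have "\<dots> \<approx> EAdd (EAdd (sym_br x y x) (sym_br z y z)) (EAdd (sym_br x y z) (sym_br z y x))"
    by (rule lc_add[OF lc_add[OF lc_sym[OF sym_br_same[OF x y]] lc_sym[OF sym_br_same[OF z y]]]
          lc_refl])
  also note expanded
  finally show ?thesis .
qed

lemma sym_br_anticommute:
  assumes x: "x \<in> lcarrier L" and y: "y \<in> lcarrier L" and z: "z \<in> lcarrier L"
  shows "sym_br x z y \<approx> ESmul (-1) (sym_br x y z)"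
proof -
  have yz: "lbr L y z \<in> lcarrier L" using y z by (simp add: closed)
  have "sym_br x z y \<approx> EAdd (ESmul (-1) (T x (lbr L y z))) (ESmul (-1) (T (lbr L y z) x))"
    unfolding bracket_anticommute[OF y z]
    by (rule lc_add; rule lc_sym) (simp_all add: smult_tensor_right[OF x yz] smult_tensor_left[OF yz x])
  also have "\<dots> \<approx> ESmul (-1) (sym_br x y z)"
    by (rule lie_cong_if_atom_coeff_eq) (simp add: fun_eq_iff algebra_simps)
  finally show ?thesis .
qed

lemma sym_br_cycle:
  assumes g: "g \<in> lcarrier L" and a: "a \<in> lcarrier L" and b: "b \<in> lcarrier L"
  shows "sym_br g a b \<approx> EAdd (sym_br a b g) (ESmul (-1) (sym_br b a g))"
proof -
  have "sym_br g a b \<approx> EAdd (EAdd (T (lbr L b g) a) (ESmul (-1) (T (lbr L a g) b)))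
                              (EAdd (T a (lbr L b g)) (ESmul (-1) (T b (lbr L a g))))"
    by (rule lc_add[OF tensor_bracket_right[OF g a b] tensor_bracket_left[OF a b g]])
  also have "\<dots> \<approx> EAdd (sym_br a b g) (ESmul (-1) (sym_br b a g))"
    by (rule lie_cong_if_atom_coeff_eq) (simp add: fun_eq_iff algebra_simps)
  finally show ?thesis .
qed

text \<open>Writing F for sym_br, the two symmetries give F a b g = F g a b and
  F b a g = - F g a b, so the cycle relation reads F g a b = 2 F g a b.\<close>

lemma sym_br_zero:
  assumes g: "g \<in> lcarrier L" and a: "a \<in> lcarrier L" and b: "b \<in> lcarrier L"
  shows "sym_br g a b \<approx> EZero"
proof -
  have "sym_br a b g \<approx> ESmul (-1) (sym_br g b a)"
    by (rule lie_cong_eq_neg_if_add_zero, rule sym_br_swap13[OF a b g])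
  also have "\<dots> \<approx> ESmul (-1) (ESmul (-1) (sym_br g a b))"
    by (rule lc_smul, rule sym_br_anticommute[OF g a b])
  also have "\<dots> \<approx> sym_br g a b" by (rule lie_cong_if_atom_coeff_eq) (simp add: fun_eq_iff)
  finally have abg: "sym_br a b g \<approx> sym_br g a b" .
  have "sym_br b a g \<approx> ESmul (-1) (sym_br b g a)" by (rule sym_br_anticommute[OF b g a])
  also have "\<dots> \<approx> ESmul (-1) (ESmul (-1) (sym_br a g b))"
    by (rule lc_smul, rule lie_cong_eq_neg_if_add_zero, rule sym_br_swap13[OF b g a])
  also have "\<dots> \<approx> ESmul (-1) (ESmul (-1) (ESmul (-1) (sym_br a b g)))"
    by (rule lc_smul, rule lc_smul, rule sym_br_anticommute[OF a b g])
  also have "\<dots> \<approx> ESmul (-1) (ESmul (-1) (ESmul (-1) (sym_br g a b)))"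
    by (rule lc_smul, rule lc_smul, rule lc_smul, rule abg)
  also have "\<dots> \<approx> ESmul (-1) (sym_br g a b)"
    by (rule lie_cong_if_atom_coeff_eq) (simp add: fun_eq_iff)
  finally have bag: "sym_br b a g \<approx> ESmul (-1) (sym_br g a b)" .
  have "sym_br g a b \<approx> EAdd (sym_br a b g) (ESmul (-1) (sym_br b a g))"
    by (rule sym_br_cycle[OF g a b])
  also have "\<dots> \<approx> EAdd (sym_br g a b) (ESmul (-1) (ESmul (-1) (sym_br g a b)))"
    by (rule lc_add[OF abg lc_smul[OF bag]])
  also have "\<dots> \<approx> EAdd (sym_br g a b) (sym_br g a b)"
    by (rule lie_cong_if_atom_coeff_eq) (simp add: fun_eq_iff)
  finally show ?thesis by (rule lie_cong_zero_if_add_self[OF lc_sym])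
qed

end

context q_tensor_square
begin

definition tensor_null :: "'a \<Rightarrow> bool" where
  "tensor_null n \<longleftrightarrow> n \<in> lcarrier L \<and> (\<forall>w\<in>lcarrier L. sym_tensor w n \<approx> EZero) \<and> T n n \<approx> EZero"

lemma tensor_nullI:
  "n \<in> lcarrier L \<Longrightarrow> (\<And>w. w \<in> lcarrier L \<Longrightarrow> sym_tensor w n \<approx> EZero) \<Longrightarrow> T n n \<approx> EZero \<Longrightarrow>
   tensor_null n"
  unfolding tensor_null_def by blast

lemma
  assumes "tensor_null n"
  shows tensor_null_closed: "n \<in> lcarrier L"
    and tensor_null_sym: "w \<in> lcarrier L \<Longrightarrow> sym_tensor w n \<approx> EZero"
    and tensor_null_square: "T n n \<approx> EZero"
  using assms unfolding tensor_null_def by blast+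

lemma tensor_null_zero: "tensor_null (lzero L)"
  by (rule tensor_nullI)
    (simp_all add: zero_closed lie_cong_add_zeroI tensor_zero_left tensor_zero_right)

lemma tensor_null_bracket:
  assumes a: "a \<in> lcarrier L" and b: "b \<in> lcarrier L"
  shows "tensor_null (lbr L a b)"
proof (rule tensor_nullI)
  show "lbr L a b \<in> lcarrier L" using a b by (simp add: closed)
  show "sym_tensor w (lbr L a b) \<approx> EZero" if "w \<in> lcarrier L" for w
    using that a b by (rule sym_br_zero)
  have "T (lbr L a b) (lbr L a b) \<approx> EBrk (T a b) (T a b)"
    by (rule lc_sym, rule bracket_tensor_tensor[OF a b a b])
  also have "\<dots> \<approx> EZero" by (rule lc_alt)
  finally show "T (lbr L a b) (lbr L a b) \<approx> EZero" .
qed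

lemma tensor_null_q_smult:
  assumes h: "h \<in> lcarrier L"
  shows "tensor_null (lsmult L qr h)"
proof (rule tensor_nullI)
  show "lsmult L qr h \<in> lcarrier L" using h by (simp add: closed)
  show "sym_tensor w (lsmult L qr h) \<approx> EZero" if w: "w \<in> lcarrier L" for w
  proof -
    have "sym_tensor w (lsmult L qr h) \<approx> EAdd (ESmul qr (T w h)) (ESmul qr (T h w))"
      by (rule lc_add; rule lc_sym) (simp_all add: smult_tensor_right[OF w h] smult_tensor_left[OF h w])
    also have "\<dots> \<approx> ESmul qr (sym_tensor w h)" by (rule lc_sym, rule lc_smul_add)
    also have "\<dots> \<approx> EZero" by (rule q_sym_tensor_zero[OF w h])
    finally show ?thesis .
  qed
  show "T (lsmult L qr h) (lsmult L qr h) \<approx> EZero"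
  proof (cases "q = 0")
    case True
    then show ?thesis using tensor_zero_left zero_smult h by (simp add: zero_closed)
  next
    case False
    then have "T (lsmult L qr h) (lsmult L qr h) \<approx> EBrk (Cu h) (Cu h)"
      by (intro lc_sym[OF bracket_curly_curly]) (simp_all add: h)
    also have "\<dots> \<approx> EZero" by (rule lc_alt)
    finally show ?thesis .
  qed
qed

lemma tensor_null_add:
  assumes n1: "tensor_null n1" and n2: "tensor_null n2"
  shows "tensor_null (ladd L n1 n2)"
proof (rule tensor_nullI)
  have c1: "n1 \<in> lcarrier L" and c2: "n2 \<in> lcarrier L"
    using n1 n2 by (simp_all add: tensor_null_closed)
  then show c12: "ladd L n1 n2 \<in> lcarrier L" by (simp add: closed)
  show "sym_tensor w (ladd L n1 n2) \<approx> EZero" if w: "w \<in> lcarrier L" for w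
  proof -
    have "sym_tensor w (ladd L n1 n2) \<approx> EAdd (EAdd (T w n1) (T w n2)) (EAdd (T n1 w) (T n2 w))"
      by (rule lc_add[OF tensor_add_right[OF w c1 c2] tensor_add_left[OF c1 c2 w]])
    also have "\<dots> \<approx> EAdd (sym_tensor w n1) (sym_tensor w n2)"
      by (rule lie_cong_if_atom_coeff_eq) (simp add: fun_eq_iff algebra_simps)
    also have "\<dots> \<approx> EZero"
      by (rule lie_cong_add_zeroI[OF tensor_null_sym[OF n1 w] tensor_null_sym[OF n2 w]])
    finally show ?thesis .
  qed
  have "T (ladd L n1 n2) (ladd L n1 n2) \<approx> EAdd (T n1 (ladd L n1 n2)) (T n2 (ladd L n1 n2))"
    by (rule tensor_add_left[OF c1 c2 c12])
  also have "\<dots> \<approx> EAdd (EAdd (T n1 n1) (T n1 n2)) (EAdd (T n2 n1) (T n2 n2))"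
    by (rule lc_add[OF tensor_add_right[OF c1 c1 c2] tensor_add_right[OF c2 c1 c2]])
  also have "\<dots> \<approx> EAdd (EAdd (T n1 n1) (T n2 n2)) (sym_tensor n2 n1)"
    by (rule lie_cong_if_atom_coeff_eq) (simp add: fun_eq_iff algebra_simps)
  also have "\<dots> \<approx> EZero"
    using n1 n2 c2 by (intro lie_cong_add_zeroI tensor_null_square tensor_null_sym)
  finally show "T (ladd L n1 n2) (ladd L n1 n2) \<approx> EZero" .
qed

lemma tensor_null_smult:
  assumes n: "tensor_null n"
  shows "tensor_null (lsmult L r n)"
proof (rule tensor_nullI)
  have c: "n \<in> lcarrier L" using n by (rule tensor_null_closed)
  then show rc: "lsmult L r n \<in> lcarrier L" by (simp add: closed)
  show "sym_tensor w (lsmult L r n) \<approx> EZero" if w: "w \<in> lcarrier L" for w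
  proof -
    have "sym_tensor w (lsmult L r n) \<approx> EAdd (ESmul r (T w n)) (ESmul r (T n w))"
      by (rule lc_add; rule lc_sym) (simp_all add: smult_tensor_right[OF w c] smult_tensor_left[OF c w])
    also have "\<dots> \<approx> ESmul r (sym_tensor w n)" by (rule lc_sym, rule lc_smul_add)
    also have "\<dots> \<approx> ESmul r EZero" by (rule lc_smul[OF tensor_null_sym[OF n w]])
    also have "\<dots> \<approx> EZero" by (rule lie_cong_smul_zero)
    finally show ?thesis .
  qed
  have "T (lsmult L r n) (lsmult L r n) \<approx> ESmul r (T n (lsmult L r n))"
    by (rule lc_sym, rule smult_tensor_left[OF c rc])
  also have "\<dots> \<approx> ESmul r (ESmul r (T n n))"
    by (rule lc_smul, rule lc_sym, rule smult_tensor_right[OF c c])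
  also have "\<dots> \<approx> ESmul r (ESmul r EZero)"
    by (rule lc_smul, rule lc_smul, rule tensor_null_square[OF n])
  also have "\<dots> \<approx> EZero" by (rule lie_cong_if_atom_coeff_eq) (simp add: fun_eq_iff)
  finally show "T (lsmult L r n) (lsmult L r n) \<approx> EZero" .
qed

lemma tensor_null_sharp: "n \<in> sharp L q \<Longrightarrow> tensor_null n"
  unfolding sharp_def
proof (induction rule: submod_gen.induct)
  case sg_zero
  then show ?case by (rule tensor_null_zero)
next
  case (sg_gen s)
  then show ?case by (auto intro: tensor_null_bracket tensor_null_q_smult)
next
  case (sg_add x y)
  then show ?case by (simp add: tensor_null_add)
next
  case (sg_smult x r)
  then show ?case by (simp add: tensor_null_smult)
qed

lemma tensor_square_add_null:
  assumes u: "u \<in> lcarrier L" and n: "tensor_null n"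
  shows "T (ladd L u n) (ladd L u n) \<approx> T u u"
proof -
  have c: "n \<in> lcarrier L" using n by (rule tensor_null_closed)
  then have un: "ladd L u n \<in> lcarrier L" using u by (simp add: closed)
  have "T (ladd L u n) (ladd L u n) \<approx> EAdd (T u (ladd L u n)) (T n (ladd L u n))"
    by (rule tensor_add_left[OF u c un])
  also have "\<dots> \<approx> EAdd (EAdd (T u u) (T u n)) (EAdd (T n u) (T n n))"
    by (rule lc_add[OF tensor_add_right[OF u u c] tensor_add_right[OF c u c]])
  also have "\<dots> \<approx> EAdd (T u u) (EAdd (sym_tensor u n) (T n n))"
    by (rule lie_cong_if_atom_coeff_eq) (simp add: fun_eq_iff algebra_simps)
  also have "\<dots> \<approx> EAdd (T u u) (EAdd EZero EZero)"
    by (rule lc_add[OF lc_refl lc_add[OF tensor_null_sym[OF n u] tensor_null_square[OF n]]])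
  also have "\<dots> \<approx> T u u" by (rule lie_cong_if_atom_coeff_eq) (simp add: fun_eq_iff)
  finally show ?thesis .
qed

end

definition tensor_double_sum :: "nat \<Rightarrow> (nat \<Rightarrow> 'a) \<Rightarrow> (nat \<Rightarrow> nat \<Rightarrow> 'r) \<Rightarrow> ('r, 'a tgen) expr" where
  "tensor_double_sum m e K = esum m (\<lambda>i. esum m (\<lambda>j. ESmul (K i j) (T (e i) (e j))))"

lemma atom_coeff_tensor_double_sum:
  "atom_coeff (tensor_double_sum m e K) t =
   (\<Sum>i<m. \<Sum>j<m. K i j * (if t = T (e i) (e j) then 1 else 0))"
  unfolding tensor_double_sum_def by (simp add: atom_coeff_esum)

lemma
  fixes R :: "(('r::comm_ring_1, 'a tgen) expr \<times> ('r, 'a tgen) expr) set"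
  shows tensor_double_sum_add:
      "lie_cong R (EAdd (tensor_double_sum m e K1) (tensor_double_sum m e K2))
                  (tensor_double_sum m e (\<lambda>i j. K1 i j + K2 i j))"
    and tensor_double_sum_smult:
      "lie_cong R (ESmul r (tensor_double_sum m e K)) (tensor_double_sum m e (\<lambda>i j. r * K i j))"
    and tensor_double_sum_zero: "lie_cong R EZero (tensor_double_sum m e (\<lambda>i j. 0))"
  by (rule lie_cong_if_atom_coeff_eq;
      simp add: fun_eq_iff atom_coeff_tensor_double_sum sum.distrib sum_distrib_left algebra_simps)+

lemma sum_square_eq_sum_triangle:
  fixes f :: "nat \<Rightarrow> nat \<Rightarrow> 'r::comm_ring_1"
  shows "(\<Sum>i<m. \<Sum>j<m. f i j) = (\<Sum>i<m. (\<Sum>j<i. f j i + f i j) + f i i)"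
  by (induction m) (simp_all add: sum.distrib algebra_simps)

context q_tensor_square
begin

lemma tensor_lincomb_esum_left:
  assumes e: "\<And>i. i < m \<Longrightarrow> e i \<in> lcarrier L" and Y: "Y \<in> lcarrier L"
  shows "T (interp L (lincomb_esum m f e)) Y \<approx> esum m (\<lambda>i. ESmul (f i) (T (e i) Y))"
  using e
proof (induction m)
  case 0
  then show ?case using tensor_zero_left[OF Y] by simp
next
  case (Suc m)
  then have em: "e m \<in> lcarrier L" by simp
  have "T (interp L (lincomb_esum (Suc m) f e)) Y \<approx>
        EAdd (T (interp L (lincomb_esum m f e)) Y) (T (lsmult L (f m) (e m)) Y)"
    using em by (simp add: tensor_add_left interp_closed closed Y)
  also have "\<dots> \<approx> EAdd (esum m (\<lambda>i. ESmul (f i) (T (e i) Y))) (ESmul (f m) (T (e m) Y))"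
    using Suc by (intro lc_add lc_sym[OF smult_tensor_left]) (simp_all add: em Y)
  finally show ?case by simp
qed

lemma tensor_lincomb_esum_right:
  assumes e: "\<And>i. i < m \<Longrightarrow> e i \<in> lcarrier L" and Y: "Y \<in> lcarrier L"
  shows "T Y (interp L (lincomb_esum m f e)) \<approx> esum m (\<lambda>i. ESmul (f i) (T Y (e i)))"
  using e
proof (induction m)
  case 0
  then show ?case using tensor_zero_right[OF Y] by simp
next
  case (Suc m)
  then have em: "e m \<in> lcarrier L" by simp
  have "T Y (interp L (lincomb_esum (Suc m) f e)) \<approx>
        EAdd (T Y (interp L (lincomb_esum m f e))) (T Y (lsmult L (f m) (e m)))"
    using em by (simp add: tensor_add_right interp_closed closed Y)
  also have "\<dots> \<approx> EAdd (esum m (\<lambda>i. ESmul (f i) (T Y (e i)))) (ESmul (f m) (T Y (e m)))"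
    using Suc by (intro lc_add lc_sym[OF smult_tensor_right]) (simp_all add: em Y)
  finally show ?case by simp
qed

lemma tensor_square_lincomb_esum:
  fixes f :: "nat \<Rightarrow> 'r"
  assumes e: "\<And>i. i < m \<Longrightarrow> e i \<in> lcarrier L"
  defines "u \<equiv> interp L (lincomb_esum m f e)"
  shows "T u u \<approx> tensor_double_sum m e (\<lambda>i j. f i * f j)"
proof -
  have u: "u \<in> lcarrier L" unfolding u_def by (rule interp_closed)
  have "T u u \<approx> esum m (\<lambda>i. ESmul (f i) (T (e i) u))"
    unfolding u_def by (rule tensor_lincomb_esum_left[OF e u[unfolded u_def]])
  also have "\<dots> \<approx> esum m (\<lambda>i. ESmul (f i) (esum m (\<lambda>j. ESmul (f j) (T (e i) (e j)))))"
    unfolding u_def by (intro esum_lie_cong lc_smul tensor_lincomb_esum_right e) auto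
  also have "\<dots> \<approx> tensor_double_sum m e (\<lambda>i j. f i * f j)"
    by (rule lie_cong_if_atom_coeff_eq)
      (simp add: fun_eq_iff atom_coeff_esum atom_coeff_tensor_double_sum sum_distrib_left mult.assoc)
  finally show ?thesis .
qed

text \<open>Grouping the terms (i, j) and (j, i) exhibits a double sum with
  coefficients q k i j, k symmetric, as a sum of the elements
  q (a \<otimes> b + b \<otimes> a) and q (a \<otimes> a), all of which vanish.\<close>

lemma tensor_double_sum_q_sym_zero:
  assumes e: "\<And>i. i < m \<Longrightarrow> e i \<in> lcarrier L"
    and K: "\<And>i j. K i j = qr * k i j" and sym: "\<And>i j. k i j = k j i"
  shows "tensor_double_sum m e K \<approx> EZero"
proof -
  let ?pairs = "esum m (\<lambda>i. EAdd (esum i (\<lambda>j. ESmul (k j i) (ESmul qr (sym_tensor (e j) (e i)))))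
                                (ESmul (k i i) (ESmul qr (T (e i) (e i)))))"
  have "atom_coeff (tensor_double_sum m e K) t = atom_coeff ?pairs t" for t
  proof -
    let ?f = "\<lambda>i j. qr * k i j * (if t = T (e i) (e j) then 1 else 0)"
    have "atom_coeff (tensor_double_sum m e K) t = (\<Sum>i<m. \<Sum>j<m. ?f i j)"
      by (simp add: atom_coeff_tensor_double_sum K)
    also have "\<dots> = (\<Sum>i<m. (\<Sum>j<i. ?f j i + ?f i j) + ?f i i)"
      by (rule sum_square_eq_sum_triangle)
    also have "\<dots> = atom_coeff ?pairs t"
      by (simp add: atom_coeff_esum algebra_simps sum.distrib sym)
    finally show ?thesis .
  qed
  then have "tensor_double_sum m e K \<approx> ?pairs" by (intro lie_cong_if_atom_coeff_eq ext)
  also have "?pairs \<approx> EZero"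
  proof (intro esum_lie_cong_zero lie_cong_add_zeroI)
    fix i j assume "i < m" "j < i"
    then show "ESmul (k j i) (ESmul qr (sym_tensor (e j) (e i))) \<approx> EZero"
      using e lc_trans[OF lc_smul[OF q_sym_tensor_zero] lie_cong_smul_zero] by simp
  next
    fix i assume "i < m"
    then show "ESmul (k i i) (ESmul qr (T (e i) (e i))) \<approx> EZero"
      using e lc_trans[OF lc_smul[OF q_tensor_self_zero] lie_cong_smul_zero] by simp
  qed
  finally show ?thesis .
qed

end

section \<open>The kernel of the projection on squares\<close>

lemma espan_mono: "S \<subseteq> S' \<Longrightarrow> espan S \<subseteq> espan S'"
proof
  fix x assume "S \<subseteq> S'" "x \<in> espan S"
  then show "x \<in> espan S'"
    by (induction rule: espan.induct[OF \<open>x \<in> espan S\<close>]) (auto intro: espan.intros)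
qed

lemma espan_finite_generators:
  "x \<in> espan (f ` S) \<Longrightarrow> \<exists>G \<subseteq> S. finite G \<and> x \<in> espan (f ` G)"
proof (induction rule: espan.induct)
  case es_zero
  then show ?case by (auto intro: espan.es_zero)
next
  case (es_gen s)
  then obtain g where "g \<in> S" "s = f g" by blast
  then show ?case by (intro exI[of _ "{g}"]) (auto intro: espan.es_gen)
next
  case (es_add a b)
  then obtain G H where "G \<subseteq> S" "finite G" "a \<in> espan (f ` G)" "H \<subseteq> S" "finite H" "b \<in> espan (f ` H)"
    by blast
  then show ?case
    using espan_mono[of "f ` G" "f ` (G \<union> H)"] espan_mono[of "f ` H" "f ` (G \<union> H)"]
    by (intro exI[of _ "G \<union> H"]) (auto intro: espan.es_add)
next
  case (es_smul a r)
  then show ?case by (auto intro: espan.es_smul)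
qed

lemma squares_eq_image: "{T g g | g. g \<in> S} = (\<lambda>g. T g g) ` S"
  by blast

lemma bilin_eval_square_sym:
  "y \<in> espan ((\<lambda>g. T g g) ` S) \<Longrightarrow>
   bilin_eval c1 c2 C (emap (pgen L N) y) = bilin_eval c2 c1 C (emap (pgen L N) y)"
  by (induction rule: espan.induct) (auto simp: mult.commute)

lemma dvd_sym_factor:
  fixes K :: "nat \<Rightarrow> nat \<Rightarrow> 'r::comm_ring_1"
  assumes dvd: "\<And>i j. c dvd K i j" and sym: "\<And>i j. K i j = K j i"
  obtains k where "\<And>i j. K i j = c * k i j" and "\<And>i j. k i j = k j i"
proof -
  obtain k0 where k0: "K i j = c * k0 i j" for i j
    using dvd unfolding dvd_def by metis
  have K: "K i j = c * k0 (min i j) (max i j)" for i j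
    using k0 sym by (cases "i \<le> j") (auto simp: min_def max_def)
  have k: "k0 (min i j) (max i j) = k0 (min j i) (max j i)" for i j
    by (simp add: min.commute max.commute)
  show ?thesis by (rule that[OF K k])
qed

locale free_quotient = lie_algebra L for L :: "('r::comm_ring_1, 'a) liealg" +
  fixes q :: nat and B :: "'a set set"
  assumes free_basis: "free_basis (quot L (sharp L q)) q B"
begin

sublocale q_tensor_square L q by unfold_locales

sublocale lie_submodule L "sharp L q"
  by unfold_locales (rule submodule_sharp)

abbreviation M :: "('r, 'a set) liealg" where "M \<equiv> quot L (sharp L q)"

lemma quot_abelian: "A \<in> lcarrier M \<Longrightarrow> A' \<in> lcarrier M \<Longrightarrow> lbr M A A' = lzero M"
  by (auto simp: quot_carrier quot_bracket bracket_in_sharp)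

sublocale Q: free_module M q B
  by unfold_locales (simp_all add: quot_is_lie bracket_in_sharp free_basis)

abbreviation p :: "('r, 'a tgen) expr \<Rightarrow> ('r, 'a set tgen) expr" where
  "p \<equiv> emap (pgen L (sharp L q))"

abbreviation \<pi> :: "'a \<Rightarrow> 'a set" where "\<pi> \<equiv> coset L (sharp L q)"

lemma lift_basis:
  assumes "b \<in> B"
  shows "rep b \<in> lcarrier L" and "\<pi> (rep b) = b"
proof -
  obtain y where "y \<in> lcarrier L" "b = \<pi> y"
    using assms Q.basis_subset quot_carrier by auto
  then show "rep b \<in> lcarrier L" and "\<pi> (rep b) = b"
    by (simp_all add: rep_coset_closed coset_rep_coset)
qed

lemma lift_nth:
  assumes "set ds \<subseteq> B" "i < length ds"
  shows "rep (ds ! i) \<in> lcarrier L" and "\<pi> (rep (ds ! i)) = ds ! i"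
  using assms lift_basis nth_mem by blast+

lemma coset_lincomb_coords:
  assumes g: "g \<in> lcarrier L"
    and ds: "distinct ds" "set ds \<subseteq> B" "Q.support (\<pi> g) \<subseteq> set ds"
  shows "\<pi> (interp L (lincomb_esum (length ds) (\<lambda>i. Q.coord (ds ! i) (\<pi> g)) (\<lambda>i. rep (ds ! i))))
         = \<pi> g"
proof -
  let ?f = "\<lambda>i. Q.coord (ds ! i) (\<pi> g)"
  have "\<pi> (interp L (lincomb_esum (length ds) ?f (\<lambda>i. rep (ds ! i)))) =
        interp M (lincomb_esum (length ds) ?f (\<lambda>i. \<pi> (rep (ds ! i))))"
    using ds(2) by (intro coset_interp_esum lift_nth)
  also have "\<dots> = interp M (lincomb_esum (length ds) ?f ((!) ds))"
    using ds(2) by (intro arg_cong[where f = "interp M"] esum_cong) (simp add: lift_nth)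
  also have "\<dots> = \<pi> g"
    using g ds by (intro Q.interp_coords) (auto simp: quot_carrier)
  finally show ?thesis .
qed

lemma tensor_square_eq_double_sum:
  assumes g: "g \<in> lcarrier L"
    and ds: "distinct ds" "set ds \<subseteq> B" "Q.support (\<pi> g) \<subseteq> set ds"
  shows "T g g \<approx> tensor_double_sum (length ds) (\<lambda>i. rep (ds ! i))
                   (\<lambda>i j. Q.coord (ds ! i) (\<pi> g) * Q.coord (ds ! j) (\<pi> g))"
proof -
  define u where
    "u = interp L (lincomb_esum (length ds) (\<lambda>i. Q.coord (ds ! i) (\<pi> g)) (\<lambda>i. rep (ds ! i)))"
  have u: "u \<in> lcarrier L" unfolding u_def by (rule interp_closed)
  have "\<pi> g = \<pi> u" unfolding u_def using coset_lincomb_coords[OF g ds] by simp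
  then have n: "ladd L g (lsmult L (-1) u) \<in> sharp L q" using coset_eq_iff[OF g u] by blast
  have "interp L (EGen g) = interp L (EAdd (EGen u) (EAdd (EGen g) (ESmul (-1) (EGen u))))"
    by (rule interp_eq_if_atom_coeff_eq) (simp add: fun_eq_iff)
  then have "T g g = T (ladd L u (ladd L g (lsmult L (-1) u))) (ladd L u (ladd L g (lsmult L (-1) u)))"
    using g u by simp
  also have "\<dots> \<approx> T u u" by (rule tensor_square_add_null[OF u tensor_null_sharp[OF n]])
  also have "\<dots> \<approx> tensor_double_sum (length ds) (\<lambda>i. rep (ds ! i))
                   (\<lambda>i j. Q.coord (ds ! i) (\<pi> g) * Q.coord (ds ! j) (\<pi> g))"
    unfolding u_def using ds(2) by (intro tensor_square_lincomb_esum lift_nth)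
  finally show ?thesis .
qed

abbreviation coord_pairing :: "'a set list \<Rightarrow> ('r, 'a tgen) expr \<Rightarrow> nat \<Rightarrow> nat \<Rightarrow> 'r" where
  "coord_pairing ds y i j \<equiv> bilin_eval (Q.coord (ds ! i)) (Q.coord (ds ! j)) (lcarrier M) (p y)"

lemma span_squares_eq_double_sum:
  assumes ds: "distinct ds" "set ds \<subseteq> B"
    and G: "G \<subseteq> lcarrier L" "\<And>g. g \<in> G \<Longrightarrow> Q.support (\<pi> g) \<subseteq> set ds"
    and y: "y \<in> espan ((\<lambda>g. T g g) ` G)"
  shows "y \<approx> tensor_double_sum (length ds) (\<lambda>i. rep (ds ! i)) (coord_pairing ds y)"
  using y
proof (induction rule: espan.induct)
  case es_zero
  then show ?case using tensor_double_sum_zero by simp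
next
  case (es_gen s)
  then obtain g where "g \<in> G" "s = T g g" by blast
  then show ?case
    using tensor_square_eq_double_sum[OF _ ds G(2)] G(1) by (auto simp: quot_carrier)
next
  case (es_add a b)
  have "EAdd a b \<approx> EAdd (tensor_double_sum (length ds) (\<lambda>i. rep (ds ! i)) (coord_pairing ds a))
                              (tensor_double_sum (length ds) (\<lambda>i. rep (ds ! i)) (coord_pairing ds b))"
    using es_add.IH by (rule lc_add)
  also have "\<dots> \<approx> tensor_double_sum (length ds) (\<lambda>i. rep (ds ! i)) (coord_pairing ds (EAdd a b))"
    using tensor_double_sum_add by simp
  finally show ?case .
next
  case (es_smul a r)
  have "ESmul r a \<approx> ESmul r (tensor_double_sum (length ds) (\<lambda>i. rep (ds ! i)) (coord_pairing ds a))"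
    using es_smul.IH by (rule lc_smul)
  also have "\<dots> \<approx> tensor_double_sum (length ds) (\<lambda>i. rep (ds ! i)) (coord_pairing ds (ESmul r a))"
    using tensor_double_sum_smult by simp
  finally show ?case .
qed

lemma coord_pairing_dvd:
  assumes "tsq_eq M q (p y) EZero"
  shows "qr dvd coord_pairing ds y i j"
proof -
  interpret P: abelian_bilinear_mod M q "Q.coord (ds ! i)" "Q.coord (ds ! j)"
    by unfold_locales (simp_all add: quot_abelian Q.linear_mod_coord)
  show ?thesis using P.bilin_eval_dvd_if_tsq_eq[OF assms] by simp
qed

lemma square_span_kernel_trivial:
  assumes y: "y \<in> espan ((\<lambda>g. T g g) ` lcarrier L)" and py: "tsq_eq M q (p y) EZero"
  shows "y \<approx> EZero"
proof -
  obtain G where G: "G \<subseteq> lcarrier L" "finite G" "y \<in> espan ((\<lambda>g. T g g) ` G)"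
    using espan_finite_generators[OF y] by blast
  have "finite (\<Union>g\<in>G. Q.support (\<pi> g))" using G(2) Q.finite_support by blast
  then obtain ds where ds: "distinct ds" "set ds = (\<Union>g\<in>G. Q.support (\<pi> g))"
    by (metis finite_distinct_list)
  have dsB: "set ds \<subseteq> B" using ds(2) G(1) Q.support_subset by (auto simp: quot_carrier)
  have "qr dvd coord_pairing ds y i j" for i j by (rule coord_pairing_dvd[OF py])
  moreover have "coord_pairing ds y i j = coord_pairing ds y j i" for i j
    by (rule bilin_eval_square_sym[OF G(3)])
  ultimately obtain k where K: "\<And>i j. coord_pairing ds y i j = qr * k i j"
    and k: "\<And>i j. k i j = k j i"
    using dvd_sym_factor[where K = "coord_pairing ds y"] by blast
  have "y \<approx> tensor_double_sum (length ds) (\<lambda>i. rep (ds ! i)) (coord_pairing ds y)"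
    using ds dsB G by (intro span_squares_eq_double_sum) auto
  also have "\<dots> \<approx> EZero"
    using dsB by (intro tensor_double_sum_q_sym_zero[OF _ K k] lift_nth)
  finally show ?thesis .
qed

end

theorem lemma5p2:
  fixes L :: "('r::comm_ring_1, 'a) liealg" and q :: nat
  assumes lie: "is_lie L"
    and free: "free_mod_q (quot L (sharp L q)) q"
  shows "\<forall>x \<in> espan {T g g | g. g \<in> lcarrier L}.
           tsq_eq (quot L (sharp L q)) q (emap (pgen L (sharp L q)) x) EZero
             \<longrightarrow> tsq_eq L q x EZero"
proof -
  obtain B where "free_basis (quot L (sharp L q)) q B"
    using free by (auto simp: free_mod_q_iff)
  then interpret free_quotient L q B by unfold_locales (rule lie)
  show ?thesis using square_span_kernel_trivial by (simp add: squares_eq_image)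
qed

end
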